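(* For circuits $f,g:a\to b$, we have $[\![f]\!]=[\![g]\!]$ in $\mathbf{Poly}_{\mathbb{Z}_2}$ if and only if $f$ and $g$ are equal modulo $A$ (i.e. related by the smallest congruence for composition and tensor containing the equations $A$).
   Context: A circuit is a morphism of the free symmetric strict monoidal category whose objects are natural numbers (tensor = addition) generated by $\mathsf{discard}:1\to 0$, $\mathsf{copy}:1\to 2$, $\mathsf{zero}:0\to1$, $\mathsf{add}:2\to1$, $\mathsf{one}:0\to 1$, $\mathsf{and}:2\to 1$. Composition is diagrammatic ($f;g$ = first $f$ then $g$), $\sigma$ is the symmetry $2\to2$, and $\mathsf{copy}_n$, $\mathsf{discard}_n$ are the evident composites. $A$ is the set of equations: $\mathsf{copy};\sigma=\mathsf{copy}$; $\mathsf{copy};(\mathsf{copy}\otimes \mathrm{id}_1)=\mathsf{copy};(\mathrm{id}_1\otimes\mathsf{copy})$; $\mathsf{copy};(\mathsf{discard}\otimes\mathrm{id}_1)=\mathrm{id}_1$; for every circuit $f:a\to b$, $f;\mathsf{copy}_b=\mathsf{copy}_a;(f\otimes f)$ and $f;\mathsf{discard}_b=\mathsf{discard}_a$; commutativity, associativity and unit laws for $(\mathsf{add},\mathsf{zero})$ and for $(\mathsf{and},\mathsf{one})$ (e.g. $\sigma;\mathsf{add}=\mathsf{add}$, $(\mathsf{add}\otimes\mathrm{id}_1);\mathsf{add}=(\mathrm{id}_1\otimes\mathsf{add});\mathsf{add}$, $(\mathsf{zero}\otimes\mathrm{id}_1);\mathsf{add}=\mathrm{id}_1$); $\mathsf{copy};\mathsf{add}=\mathsf{discard};\mathsf{zero}$;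 and distributivity $(\mathrm{id}_1\otimes\mathsf{add});\mathsf{and}=(\mathsf{copy}\otimes\mathrm{id}_2);(\mathrm{id}_1\otimes\sigma\otimes\mathrm{id}_1);(\mathsf{and}\otimes\mathsf{and});\mathsf{add}$. (Notably $A$ does not contain $\mathsf{copy};\mathsf{and}=\mathrm{id}_1$.) $\mathbf{Poly}_{\mathbb{Z}_2}$ has natural numbers as objects and $b$-tuples of polynomials in $\mathbb{Z}_2[x_1,\dots,x_a]$ as morphisms $a\to b$, composed by substitution. $[\![\cdot]\!]$ is the strict symmetric monoidal identity-on-objects interpretation sending $\mathsf{discard}\mapsto\langle\rangle$, $\mathsf{copy}\mapsto\langle x_1,x_1\rangle$, $\mathsf{zero}\mapsto\langle0\rangle$, $\mathsf{add}\mapsto\langle x_1+x_2\rangle$, $\mathsf{one}\mapsto\langle1\rangle$, $\mathsf{and}\mapsto\langle x_1x_2\rangle$. *)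

theory Defs
  imports Main "HOL-Library.Poly_Mapping" "HOL-Library.Z2"
begin

section \<open>Polynomials over Z2 in variables x_1, x_2, ... (variable x_(i+1) has index i)\<close>

text \<open>A monomial is a finitely supported exponent map nat \<Rightarrow>0 nat; a polynomial is a
finitely supported coefficient map from monomials to Z2 (type bit). Multiplication is
the convolution product of HOL-Library.Poly_Mapping, making this the polynomial ring.\<close>

type_synonym mpoly = "(nat \<Rightarrow>\<^sub>0 nat) \<Rightarrow>\<^sub>0 bit"

definition PVar :: "nat \<Rightarrow> mpoly" where
  "PVar i = Poly_Mapping.single (Poly_Mapping.single i 1) 1"

definition PConst :: "bit \<Rightarrow> mpoly" where
  "PConst c = Poly_Mapping.single 0 c"

definition mon_subst :: "(nat \<Rightarrow> mpoly) \<Rightarrow> (nat \<Rightarrow>\<^sub>0 nat) \<Rightarrow> mpoly" where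
  "mon_subst s mo = (\<Prod>i\<in>Poly_Mapping.keys mo. s i ^ Poly_Mapping.lookup mo i)"

definition psubst :: "(nat \<Rightarrow> mpoly) \<Rightarrow> mpoly \<Rightarrow> mpoly" where
  "psubst s p = (\<Sum>mo\<in>Poly_Mapping.keys p. PConst (Poly_Mapping.lookup p mo) * mon_subst s mo)"

datatype gen = Discard | Copy | Zero | Add | One | And

datatype circ =
    G gen
  | Id nat
  | Sw nat nat
  | Comp circ circ     \<comment> \<open>diagrammatic: Comp f g = f ; g\<close>
  | Tensor circ circ

fun gdom :: "gen \<Rightarrow> nat" where
  "gdom Discard = 1" | "gdom Copy = 1" | "gdom Zero = 0"
| "gdom Add = 2" | "gdom One = 0" | "gdom And = 2"

fun gcod :: "gen \<Rightarrow> nat" where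
  "gcod Discard = 0" | "gcod Copy = 2" | "gcod Zero = 1"
| "gcod Add = 1" | "gcod One = 1" | "gcod And = 1"

fun dom :: "circ \<Rightarrow> nat" where
  "dom (G x) = gdom x"
| "dom (Id n) = n"
| "dom (Sw a b) = a + b"
| "dom (Comp f g) = dom f"
| "dom (Tensor f g) = dom f + dom g"

fun cod :: "circ \<Rightarrow> nat" where
  "cod (G x) = gcod x"
| "cod (Id n) = n"
| "cod (Sw a b) = b + a"
| "cod (Comp f g) = cod g"
| "cod (Tensor f g) = cod f + cod g"

fun wt :: "circ \<Rightarrow> bool" where
  "wt (G x) = True"
| "wt (Id n) = True"
| "wt (Sw a b) = True"
| "wt (Comp f g) = (wt f \<and> wt g \<and> cod f = dom g)"
| "wt (Tensor f g) = (wt f \<and> wt g)"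

abbreviation sigma :: circ where "sigma \<equiv> Sw 1 1"

fun discard_n :: "nat \<Rightarrow> circ" where
  "discard_n 0 = Id 0"
| "discard_n (Suc n) = Tensor (G Discard) (discard_n n)"

text \<open>copy_n : n \<rightarrow> 2n, (x_1..x_n) \<mapsto> (x_1..x_n,x_1..x_n).\<close>
fun copy_n :: "nat \<Rightarrow> circ" where
  "copy_n 0 = Id 0"
| "copy_n (Suc n) = Comp (Tensor (G Copy) (copy_n n))
                         (Tensor (Tensor (Id 1) (Sw 1 n)) (Id n))"

text \<open>The smallest congruence (for composition and tensor) on well-typed circuit terms
containing the axioms of symmetric strict monoidal categories (so that its classes are
morphisms of the free SSMC) together with the equations A.\<close>

inductive eqA :: "circ \<Rightarrow> circ \<Rightarrow> bool" where
  refl: "wt f \<Longrightarrow> eqA f f"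
| sym: "eqA f g \<Longrightarrow> eqA g f"
| trans: "eqA f g \<Longrightarrow> eqA g h \<Longrightarrow> eqA f h"
| comp_cong: "eqA f f' \<Longrightarrow> eqA g g' \<Longrightarrow> cod f = dom g \<Longrightarrow> eqA (Comp f g) (Comp f' g')"
| tensor_cong: "eqA f f' \<Longrightarrow> eqA g g' \<Longrightarrow> eqA (Tensor f g) (Tensor f' g')"
| id_left: "wt f \<Longrightarrow> eqA (Comp (Id (dom f)) f) f"
| id_right: "wt f \<Longrightarrow> eqA (Comp f (Id (cod f))) f"
| comp_assoc: "wt f \<Longrightarrow> wt g \<Longrightarrow> wt h \<Longrightarrow> cod f = dom g \<Longrightarrow> cod g = dom h \<Longrightarrow>
    eqA (Comp (Comp f g) h) (Comp f (Comp g h))"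
| tensor_assoc: "wt f \<Longrightarrow> wt g \<Longrightarrow> wt h \<Longrightarrow>
    eqA (Tensor (Tensor f g) h) (Tensor f (Tensor g h))"
| tensor_unit_left: "wt f \<Longrightarrow> eqA (Tensor (Id 0) f) f"
| tensor_unit_right: "wt f \<Longrightarrow> eqA (Tensor f (Id 0)) f"
| tensor_id: "eqA (Tensor (Id m) (Id n)) (Id (m + n))"
| interchange: "wt f \<Longrightarrow> wt g \<Longrightarrow> wt h \<Longrightarrow> wt k \<Longrightarrow> cod f = dom h \<Longrightarrow> cod g = dom k \<Longrightarrow>
    eqA (Comp (Tensor f g) (Tensor h k)) (Tensor (Comp f h) (Comp g k))"
| sw_inv: "eqA (Comp (Sw a b) (Sw b a)) (Id (a + b))"
| sw_zero_right: "eqA (Sw a 0) (Id a)"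
| sw_zero_left: "eqA (Sw 0 a) (Id a)"
| sw_hex_left: "eqA (Sw (a + b) c) (Comp (Tensor (Id a) (Sw b c)) (Tensor (Sw a c) (Id b)))"
| sw_hex_right: "eqA (Sw a (b + c)) (Comp (Tensor (Sw a b) (Id c)) (Tensor (Id b) (Sw a c)))"
| sw_natural: "wt f \<Longrightarrow> wt g \<Longrightarrow>
    eqA (Comp (Tensor f g) (Sw (cod f) (cod g))) (Comp (Sw (dom f) (dom g)) (Tensor g f))"
  \<comment> \<open>the equations A\<close>
| copy_comm: "eqA (Comp (G Copy) sigma) (G Copy)"
| copy_assoc: "eqA (Comp (G Copy) (Tensor (G Copy) (Id 1))) (Comp (G Copy) (Tensor (Id 1) (G Copy)))"
| copy_unit: "eqA (Comp (G Copy) (Tensor (G Discard) (Id 1))) (Id 1)"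
| copy_natural: "wt f \<Longrightarrow> eqA (Comp f (copy_n (cod f))) (Comp (copy_n (dom f)) (Tensor f f))"
| discard_natural: "wt f \<Longrightarrow> eqA (Comp f (discard_n (cod f))) (discard_n (dom f))"
| add_comm: "eqA (Comp sigma (G Add)) (G Add)"
| add_assoc: "eqA (Comp (Tensor (G Add) (Id 1)) (G Add)) (Comp (Tensor (Id 1) (G Add)) (G Add))"
| add_unit_left: "eqA (Comp (Tensor (G Zero) (Id 1)) (G Add)) (Id 1)"
| add_unit_right: "eqA (Comp (Tensor (Id 1) (G Zero)) (G Add)) (Id 1)"
| and_comm: "eqA (Comp sigma (G And)) (G And)"
| and_assoc: "eqA (Comp (Tensor (G And) (Id 1)) (G And)) (Comp (Tensor (Id 1) (G And)) (G And))"
| and_unit_left: "eqA (Comp (Tensor (G One) (Id 1)) (G And)) (Id 1)"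
| and_unit_right: "eqA (Comp (Tensor (Id 1) (G One)) (G And)) (Id 1)"
| copy_add: "eqA (Comp (G Copy) (G Add)) (Comp (G Discard) (G Zero))"
| distrib: "eqA (Comp (Tensor (Id 1) (G Add)) (G And))
    (Comp (Comp (Comp (Tensor (G Copy) (Id 2)) (Tensor (Tensor (Id 1) sigma) (Id 1)))
                (Tensor (G And) (G And))) (G Add))"

text \<open>A morphism a \<rightarrow> b of Poly_Z2 is a b-tuple (list of length b) of polynomials in
the variables with indices < a; composition f;g substitutes the components of f into g.\<close>

fun ginterp :: "gen \<Rightarrow> mpoly list" where
  "ginterp Discard = []"
| "ginterp Copy = [PVar 0, PVar 0]"
| "ginterp Zero = [0]"
| "ginterp Add = [PVar 0 + PVar 1]"
| "ginterp One = [1]"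
| "ginterp And = [PVar 0 * PVar 1]"

fun interp :: "circ \<Rightarrow> mpoly list" where
  "interp (G x) = ginterp x"
| "interp (Id n) = map PVar [0..<n]"
| "interp (Sw a b) = map PVar ([a..<a + b] @ [0..<a])"
| "interp (Comp f g) = map (psubst (\<lambda>i. interp f ! i)) (interp g)"
| "interp (Tensor f g) = interp f @ map (psubst (\<lambda>i. PVar (i + dom f))) (interp g)"

end

theory Submission
  imports Defs
begin

text \<open>
  For completeness we work in the free category
  modulo A, the quotient type \<open>mor\<close>. Since copying and discarding are natural, it is
  cartesian, so a morphism is determined by its projections. The morphisms \<open>n \<rightarrow> 1\<close> form a
  commutative ring of characteristic 2 under the operations induced by add, and, zero and one;
  padding with discarded inputs embeds the ring for \<open>m\<close> inputs injectively into the one for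
  \<open>n \<ge> m\<close>, and the union is the ring \<open>mor1\<close>. Inserting projections into a polynomial \<open>p\<close>
  gives a morphism \<open>poly_mor n p\<close>; as insertion into \<open>mor1\<close> is a ring homomorphism and a
  morphism \<open>n \<rightarrow> 1\<close> is determined by its class in \<open>mor1\<close>, precomposing \<open>poly_mor\<close> with a
  morphism amounts to substitution (no freeness of \<open>mor1\<close> is needed). By induction, the
  projections of every circuit \<open>f\<close> are the \<open>poly_mor\<close> of the components of \<open>interp f\<close>; so
  circuits with equal interpretations have equal projections and are equal modulo A.
\<close>

section \<open>Inserting values into polynomials over Z2\<close>

class char2 = comm_ring_1 +
  assumes one_plus_one_char2: "1 + 1 = 0"

lemma add_self_char2 [simp]: "(x::'a::char2) + x = 0"
proof -
  have "x + x = (1 + 1) * x" by (simp only: distrib_right mult_1_left)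
  then show ?thesis by (simp only: one_plus_one_char2 mult_zero_left)
qed

instance bit :: char2
  by standard (simp only: one_add_one bit_2_eq_0)

instance poly_mapping :: (comm_monoid_add, char2) char2
proof
  have "(1::'a \<Rightarrow>\<^sub>0 'b) + 1 = Poly_Mapping.single 0 (1 + 1)"
    by (simp only: single_add single_one)
  then show "(1::'a \<Rightarrow>\<^sub>0 'b) + 1 = 0"
    by (simp only: one_plus_one_char2 single_zero)
qed

lemma of_bit_add: "(of_bit (a + b) :: 'a::char2) = of_bit a + of_bit b"
  by (cases a; cases b) simp_all

lemma of_bit_mult: "(of_bit (a * b) :: 'a::comm_ring_1) = of_bit a * of_bit b"
  by (cases a; cases b) simp_all

definition vars :: "mpoly \<Rightarrow> nat set" where
  "vars p = \<Union> (Poly_Mapping.keys ` Poly_Mapping.keys p)"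

definition monom_value :: "(nat \<Rightarrow> 'a::comm_ring_1) \<Rightarrow> (nat \<Rightarrow>\<^sub>0 nat) \<Rightarrow> 'a" where
  "monom_value \<rho> m = (\<Prod>i\<in>Poly_Mapping.keys m. \<rho> i ^ Poly_Mapping.lookup m i)"

definition insertion :: "(nat \<Rightarrow> 'a::comm_ring_1) \<Rightarrow> mpoly \<Rightarrow> 'a" where
  "insertion \<rho> p = (\<Sum>m\<in>Poly_Mapping.keys p. of_bit (Poly_Mapping.lookup p m) * monom_value \<rho> m)"

lemma monom_value_superset:
  assumes "finite K" "Poly_Mapping.keys m \<subseteq> K"
  shows "monom_value \<rho> m = (\<Prod>i\<in>K. \<rho> i ^ Poly_Mapping.lookup m i)"
  unfolding monom_value_def
  by (rule prod.mono_neutral_left) (use assms in \<open>auto simp: in_keys_iff\<close>)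

lemma insertion_superset:
  assumes "finite K" "Poly_Mapping.keys p \<subseteq> K"
  shows "insertion \<rho> p = (\<Sum>m\<in>K. of_bit (Poly_Mapping.lookup p m) * monom_value \<rho> m)"
  unfolding insertion_def
  by (rule sum.mono_neutral_left) (use assms in \<open>auto simp: in_keys_iff\<close>)

lemma monom_value_add: "monom_value \<rho> (m + m') = monom_value \<rho> m * monom_value \<rho> m'"
proof -
  let ?K = "Poly_Mapping.keys m \<union> Poly_Mapping.keys m'"
  have K: "finite ?K" by simp
  have "monom_value \<rho> (m + m') = (\<Prod>i\<in>?K. \<rho> i ^ Poly_Mapping.lookup (m + m') i)"
    by (rule monom_value_superset[OF K]) (rule keys_add)
  also have "\<dots> = (\<Prod>i\<in>?K. \<rho> i ^ Poly_Mapping.lookup m i) * (\<Prod>i\<in>?K. \<rho> i ^ Poly_Mapping.lookup m' i)"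
    by (simp add: lookup_add power_add prod.distrib)
  also have "\<dots> = monom_value \<rho> m * monom_value \<rho> m'"
    by (simp add: monom_value_superset[OF K])
  finally show ?thesis .
qed

lemma monom_value_single [simp]: "monom_value \<rho> (Poly_Mapping.single i k) = \<rho> i ^ k"
  by (simp add: monom_value_def)

lemma insertion_zero [simp]: "insertion \<rho> 0 = 0"
  by (simp add: insertion_def)

lemma insertion_single [simp]: "insertion \<rho> (Poly_Mapping.single m c) = of_bit c * monom_value \<rho> m"
  by (subst insertion_superset[of "{m}"]) auto

lemma insertion_add: "insertion \<rho> (p + q) = insertion \<rho> p + (insertion \<rho> q :: 'a::char2)"
proof -
  let ?K = "Poly_Mapping.keys p \<union> Poly_Mapping.keys q"
  have K: "finite ?K" by simp
  have "insertion \<rho> (p + q) = (\<Sum>m\<in>?K. of_bit (Poly_Mapping.lookup (p + q) m) * monom_value \<rho> m)"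
    by (rule insertion_superset[OF K]) (rule keys_add)
  also have "\<dots> = (\<Sum>m\<in>?K. of_bit (Poly_Mapping.lookup p m) * monom_value \<rho> m)
                 + (\<Sum>m\<in>?K. of_bit (Poly_Mapping.lookup q m) * monom_value \<rho> m)"
    by (simp only: lookup_add of_bit_add distrib_right sum.distrib)
  also have "\<dots> = insertion \<rho> p + insertion \<rho> q"
    by (simp add: insertion_superset[OF K])
  finally show ?thesis .
qed

lemma insertion_sum: "insertion \<rho> (\<Sum>x\<in>A. f x) = (\<Sum>x\<in>A. insertion \<rho> (f x) :: 'a::char2)"
  by (induction A rule: infinite_finite_induct) (simp_all add: insertion_add)

lemma poly_mapping_sum_single:
  "(\<Sum>k\<in>Poly_Mapping.keys p. Poly_Mapping.single k (Poly_Mapping.lookup p k)) = p"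
proof (rule poly_mapping_eqI)
  fix x
  have "(\<Sum>k\<in>Poly_Mapping.keys p. Poly_Mapping.lookup (Poly_Mapping.single k (Poly_Mapping.lookup p k)) x)
     = (\<Sum>k\<in>Poly_Mapping.keys p. if k = x then Poly_Mapping.lookup p k else 0)"
    by (rule sum.cong) (auto simp: lookup_single when_def)
  also have "\<dots> = Poly_Mapping.lookup p x"
    by (auto simp: sum.delta' in_keys_iff)
  finally show "Poly_Mapping.lookup (\<Sum>k\<in>Poly_Mapping.keys p. Poly_Mapping.single k (Poly_Mapping.lookup p k)) x
      = Poly_Mapping.lookup p x"
    by (simp add: lookup_sum)
qed

lemma insertion_mult: "insertion \<rho> (p * q) = insertion \<rho> p * (insertion \<rho> q :: 'a::char2)"
proof -
  let ?P = "Poly_Mapping.keys p" and ?Q = "Poly_Mapping.keys q"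
  have "p * q = (\<Sum>k\<in>?P. Poly_Mapping.single k (Poly_Mapping.lookup p k))
              * (\<Sum>l\<in>?Q. Poly_Mapping.single l (Poly_Mapping.lookup q l))"
    by (simp only: poly_mapping_sum_single)
  also have "\<dots> = (\<Sum>k\<in>?P. \<Sum>l\<in>?Q. Poly_Mapping.single (k + l) (Poly_Mapping.lookup p k * Poly_Mapping.lookup q l))"
    by (simp add: sum_product mult_single)
  finally have pq: "p * q = \<dots>" .
  have "insertion \<rho> (Poly_Mapping.single (k + l) (a * b))
      = (of_bit a * monom_value \<rho> k) * (of_bit b * monom_value \<rho> l)" for k l a b
    by (simp only: insertion_single of_bit_mult monom_value_add mult_ac)
  then have "insertion \<rho> (p * q) = (\<Sum>k\<in>?P. \<Sum>l\<in>?Q. (of_bit (Poly_Mapping.lookup p k) * monom_value \<rho> k)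
                                        * (of_bit (Poly_Mapping.lookup q l) * monom_value \<rho> l))"
    unfolding pq by (simp only: insertion_sum)
  also have "\<dots> = insertion \<rho> p * insertion \<rho> q"
    by (simp only: insertion_def sum_product)
  finally show ?thesis .
qed

lemma insertion_one [simp]: "insertion \<rho> 1 = 1"
  by (simp add: monom_value_def flip: single_one)

lemma insertion_PVar [simp]: "insertion \<rho> (PVar i) = \<rho> i"
  by (simp add: PVar_def)

lemma insertion_pow: "insertion \<rho> (p ^ n) = (insertion \<rho> p :: 'a::char2) ^ n"
  by (induction n) (simp_all add: insertion_mult)

lemma insertion_prod: "insertion \<rho> (\<Prod>x\<in>A. f x) = (\<Prod>x\<in>A. insertion \<rho> (f x) :: 'a::char2)"
  by (induction A rule: infinite_finite_induct) (simp_all add: insertion_mult)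

lemma PConst_eq_of_bit: "PConst c = of_bit c"
  by (cases c) (simp_all add: PConst_def)

lemma psubst_eq_insertion [simp]: "psubst = insertion"
  by (intro ext) (simp add: psubst_def insertion_def PConst_eq_of_bit mon_subst_def monom_value_def)

lemma insertion_insertion:
  "insertion \<rho> (insertion \<sigma> p) = (insertion (\<lambda>i. insertion \<rho> (\<sigma> i)) p :: 'a::char2)"
  unfolding insertion_def[of \<sigma> p]
  by (simp add: insertion_sum insertion_mult monom_value_def insertion_prod insertion_pow
      flip: PConst_eq_of_bit) (simp add: insertion_def monom_value_def)

lemma monom_value_PVar: "monom_value PVar m = Poly_Mapping.single m 1"
proof -
  have single_pow: "Poly_Mapping.single (Poly_Mapping.single i 1) (1::bit) ^ k
      = Poly_Mapping.single (Poly_Mapping.single i k) 1" for i k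
    by (induction k) (simp_all add: mult_single flip: single_add)
  have prod_single: "(\<Prod>i\<in>A. Poly_Mapping.single (f i) (1::bit)) = Poly_Mapping.single (\<Sum>i\<in>A. f i) 1"
    for A and f :: "nat \<Rightarrow> nat \<Rightarrow>\<^sub>0 nat"
    by (induction A rule: infinite_finite_induct) (simp_all add: mult_single)
  have "monom_value PVar m
      = (\<Prod>i\<in>Poly_Mapping.keys m. Poly_Mapping.single (Poly_Mapping.single i (Poly_Mapping.lookup m i)) 1)"
    by (simp only: monom_value_def PVar_def single_pow)
  also have "\<dots> = Poly_Mapping.single m 1"
    by (simp add: poly_mapping_sum_single prod_single)
  finally show ?thesis .
qed

lemma insertion_PVar_id [simp]: "insertion PVar p = p"
proof -
  have "insertion PVar p = (\<Sum>m\<in>Poly_Mapping.keys p. Poly_Mapping.single m (Poly_Mapping.lookup p m))"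
    unfolding insertion_def monom_value_PVar
    by (rule sum.cong) (auto simp: mult_single simp flip: PConst_eq_of_bit PConst_def)
  then show ?thesis by (simp only: poly_mapping_sum_single)
qed

lemma insertion_cong:
  assumes "\<And>i. i \<in> vars p \<Longrightarrow> \<rho> i = \<rho>' i"
  shows "insertion \<rho> p = insertion \<rho>' p"
proof -
  have "\<rho> i = \<rho>' i" if "m \<in> Poly_Mapping.keys p" "i \<in> Poly_Mapping.keys m" for m i
    using assms that by (auto simp: vars_def)
  then show ?thesis unfolding insertion_def monom_value_def
    by (intro sum.cong refl arg_cong2[where f = "(*)"] prod.cong) simp_all
qed

lemma vars_add: "vars (p + q) \<subseteq> vars p \<union> vars q"
  unfolding vars_def using keys_add[of p q] by blast

lemma vars_mult: "vars (p * q) \<subseteq> vars p \<union> vars q"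
proof
  fix x assume "x \<in> vars (p * q)"
  then obtain m where m: "m \<in> Poly_Mapping.keys (p * q)" "x \<in> Poly_Mapping.keys m"
    by (auto simp: vars_def)
  then obtain a b where "m = a + b" "a \<in> Poly_Mapping.keys p" "b \<in> Poly_Mapping.keys q"
    using keys_mult[of p q] by blast
  then show "x \<in> vars p \<union> vars q"
    using m keys_add[of a b] by (auto simp: vars_def)
qed

lemma vars_zero [simp]: "vars 0 = {}"
  by (simp add: vars_def)

lemma vars_one [simp]: "vars 1 = {}"
  by (simp add: vars_def)

lemma vars_PVar [simp]: "vars (PVar i) = {i}"
  by (simp add: vars_def PVar_def)

lemma vars_sum: "vars (\<Sum>x\<in>A. f x) \<subseteq> (\<Union>x\<in>A. vars (f x))"
proof (induction A rule: infinite_finite_induct)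
  case (insert x F) then show ?case using vars_add[of "f x" "sum f F"] by auto
qed simp_all

lemma vars_prod: "vars (\<Prod>x\<in>A. f x) \<subseteq> (\<Union>x\<in>A. vars (f x))"
proof (induction A rule: infinite_finite_induct)
  case (insert x F) then show ?case using vars_mult[of "f x" "prod f F"] by auto
qed simp_all

lemma vars_pow: "vars (p ^ n) \<subseteq> vars p"
proof (induction n)
  case (Suc n) then show ?case using vars_mult[of p "p ^ n"] by auto
qed simp

lemma vars_monom_value: "vars (monom_value \<sigma> m) \<subseteq> (\<Union>i\<in>Poly_Mapping.keys m. vars (\<sigma> i))"
proof -
  have "vars (monom_value \<sigma> m) \<subseteq> (\<Union>i\<in>Poly_Mapping.keys m. vars (\<sigma> i ^ Poly_Mapping.lookup m i))"
    unfolding monom_value_def by (rule vars_prod)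
  also have "\<dots> \<subseteq> (\<Union>i\<in>Poly_Mapping.keys m. vars (\<sigma> i))"
    using vars_pow by (intro UN_mono) auto
  finally show ?thesis .
qed

lemma vars_insertion: "vars (insertion \<sigma> p) \<subseteq> (\<Union>i\<in>vars p. vars (\<sigma> i))"
proof -
  have of_bit_mult: "vars (of_bit c * q) \<subseteq> vars q" for c q
    by (cases c) simp_all
  have "vars (insertion \<sigma> p)
      \<subseteq> (\<Union>m\<in>Poly_Mapping.keys p. vars (of_bit (Poly_Mapping.lookup p m) * monom_value \<sigma> m))"
    unfolding insertion_def by (rule vars_sum)
  also have "\<dots> \<subseteq> (\<Union>m\<in>Poly_Mapping.keys p. vars (monom_value \<sigma> m))"
    using of_bit_mult by (intro UN_mono) auto
  also have "\<dots> \<subseteq> (\<Union>m\<in>Poly_Mapping.keys p. \<Union>i\<in>Poly_Mapping.keys m. vars (\<sigma> i))"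
    by (intro UN_mono order.refl vars_monom_value)
  also have "\<dots> = (\<Union>i\<in>vars p. vars (\<sigma> i))"
    unfolding vars_def by blast
  finally show ?thesis .
qed

section \<open>Soundness of the interpretation\<close>

lemma discard_n_dom [simp]: "dom (discard_n n) = n"
  and discard_n_cod [simp]: "cod (discard_n n) = 0"
  and discard_n_wt [simp]: "wt (discard_n n)"
  by (induction n) auto

lemma copy_n_dom [simp]: "dom (copy_n n) = n"
  and copy_n_cod [simp]: "cod (copy_n n) = n + n"
  and copy_n_wt [simp]: "wt (copy_n n)"
  by (induction n) auto

lemma eqA_wtD:
  assumes "eqA f g"
  shows "wt f" "wt g" "dom g = dom f" "cod g = cod f"
  using assms by (induction rule: eqA.induct) auto

lemma length_interp: "wt f \<Longrightarrow> length (interp f) = cod f"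
proof (induction f)
  case (G x) then show ?case by (cases x) auto
qed auto

lemma vars_interp: "wt f \<Longrightarrow> p \<in> set (interp f) \<Longrightarrow> vars p \<subseteq> {..<dom f}"
proof (induction f arbitrary: p)
  case (G x) then show ?case
    using vars_add[of "PVar 0" "PVar 1"] vars_mult[of "PVar 0" "PVar 1"]
    by (cases x) auto
next
  case (Comp f g)
  then obtain q where q: "q \<in> set (interp g)" "p = insertion (\<lambda>i. interp f ! i) q"
    by auto
  have "vars q \<subseteq> {..<cod f}" using Comp q by auto
  then have "vars (interp f ! i) \<subseteq> {..<dom f}" if "i \<in> vars q" for i
    using that Comp.prems length_interp[of f] by (intro Comp.IH(1)) auto
  then have "(\<Union>i\<in>vars q. vars (interp f ! i)) \<subseteq> {..<dom f}" by blast
  then show ?case using vars_insertion[of "\<lambda>i. interp f ! i" q] q by auto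
next
  case (Tensor f g)
  show ?case
  proof (cases "p \<in> set (interp f)")
    case True then show ?thesis using Tensor by fastforce
  next
    case False
    then obtain q where q: "q \<in> set (interp g)" "p = insertion (\<lambda>i. PVar (i + dom f)) q"
      using Tensor by auto
    have "vars q \<subseteq> {..<dom g}" using Tensor q by auto
    then have "(\<Union>i\<in>vars q. vars (PVar (i + dom f))) \<subseteq> {..<dom f + dom g}" by auto
    then show ?thesis using vars_insertion[of "\<lambda>i. PVar (i + dom f)" q] q by auto
  qed
qed auto

lemma insertion_interp_cong:
  assumes "wt f" "p \<in> set (interp f)" "\<And>i. i < dom f \<Longrightarrow> \<rho> i = \<rho>' i"
  shows "insertion \<rho> p = insertion \<rho>' p"
  using assms vars_interp by (blast intro: insertion_cong)

lemma map_nth_upt_length [simp]: "n = length xs \<Longrightarrow> map (\<lambda>i. xs ! i) [0..<n] = xs"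
  by (simp add: map_nth)

lemma map_upt_add: "map f [0..<m + n] = map f [0..<m] @ map (\<lambda>i. f (i + m)) [0..<n]"
proof -
  have "[0..<m + n] = [0..<m] @ [m..<m + n]" by (rule upt_add_eq_append) simp
  moreover have "[m..<m + n] = map (\<lambda>i. i + m) [0..<n]"
    by (subst map_add_upt) (simp add: add.commute)
  ultimately show ?thesis by simp
qed

definition wiring :: "circ \<Rightarrow> nat \<Rightarrow> (nat \<Rightarrow> nat) \<Rightarrow> bool" where
  "wiring f n u \<longleftrightarrow> interp f = map (\<lambda>i. PVar (u i)) [0..<n]"

lemma wiring_cong: "wiring f n u \<Longrightarrow> n = n' \<Longrightarrow> (\<And>i. i < n \<Longrightarrow> u i = v i) \<Longrightarrow> wiring f n' v"
  by (simp add: wiring_def)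

lemma wiring_interp_eq:
  "wiring f n u \<Longrightarrow> wiring g n' v \<Longrightarrow> n = n' \<Longrightarrow> (\<And>i. i < n \<Longrightarrow> u i = v i) \<Longrightarrow> interp f = interp g"
  by (simp add: wiring_def)

lemma wiring_Comp:
  assumes "wiring f m u" "wiring g n v" "\<And>i. i < n \<Longrightarrow> v i < m"
  shows "wiring (Comp f g) n (\<lambda>i. u (v i))"
  using assms by (simp add: wiring_def)

lemma wiring_Tensor:
  assumes "wiring f m u" "wiring g n v"
  shows "wiring (Tensor f g) (m + n) (\<lambda>i. if i < m then u i else v (i - m) + dom f)"
  using assms unfolding wiring_def map_upt_add by simp

lemma wiring_Id: "wiring (Id n) n (\<lambda>i. i)"
  by (simp add: wiring_def)

lemma wiring_Sw: "wiring (Sw a b) (b + a) (\<lambda>i. if i < b then a + i else i - b)"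
proof -
  have "[a..<a + b] = map (\<lambda>i. i + a) [0..<b]"
    by (subst map_add_upt) (simp add: add.commute)
  then show ?thesis unfolding wiring_def map_upt_add by (simp add: add.commute)
qed

lemma wiring_copy_n: "wiring (copy_n n) (n + n) (\<lambda>i. if i < n then i else i - n)"
proof (induction n)
  case 0 then show ?case by (simp add: wiring_def)
next
  case (Suc n)
  have "wiring (G Copy) 2 (\<lambda>i. 0)"
    by (simp add: wiring_def eval_nat_numeral)
  from wiring_Comp[OF wiring_Tensor[OF this Suc]
      wiring_Tensor[OF wiring_Tensor[OF wiring_Id wiring_Sw] wiring_Id]]
  show ?case
    unfolding copy_n.simps by (rule wiring_cong) auto
qed

lemma interp_discard_n [simp]: "interp (discard_n n) = []"
  by (induction n) auto

lemma interp_copy_n: "interp (copy_n n) = map PVar ([0..<n] @ [0..<n])"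
  using wiring_copy_n[of n] unfolding wiring_def map_upt_add by simp

lemma interp_id_left:
  assumes "wt f"
  shows "interp (Comp (Id (dom f)) f) = interp f"
proof -
  have "insertion (\<lambda>i. map PVar [0..<dom f] ! i) p = insertion PVar p" if "p \<in> set (interp f)" for p
    by (rule insertion_interp_cong[OF assms that]) simp
  then show ?thesis by (simp add: map_idI)
qed

lemma interp_id_right: "wt f \<Longrightarrow> interp (Comp f (Id (cod f))) = interp f"
  using length_interp[of f] by (simp add: o_def map_nth)

lemma interp_comp_assoc:
  assumes "wt f" "wt g" "wt h" "cod f = dom g" "cod g = dom h"
  shows "interp (Comp (Comp f g) h) = interp (Comp f (Comp g h))"
proof -
  have "insertion (\<lambda>i. map (insertion (\<lambda>i. interp f ! i)) (interp g) ! i) p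
      = insertion (\<lambda>i. insertion (\<lambda>i. interp f ! i) (interp g ! i)) p"
    if "p \<in> set (interp h)" for p
    by (rule insertion_interp_cong[OF \<open>wt h\<close> that]) (use assms length_interp in simp)
  then show ?thesis by (simp add: insertion_insertion)
qed

lemma interp_tensor_assoc: "interp (Tensor (Tensor f g) h) = interp (Tensor f (Tensor g h))"
  by (simp add: insertion_insertion o_def ac_simps)

lemma interp_interchange:
  assumes "wt f" "wt g" "wt h" "wt k" "cod f = dom h" "cod g = dom k"
  shows "interp (Comp (Tensor f g) (Tensor h k)) = interp (Tensor (Comp f h) (Comp g k))"
proof -
  let ?fg = "interp f @ map (insertion (\<lambda>i. PVar (i + dom f))) (interp g)"
  have lf: "length (interp f) = cod f" and lg: "length (interp g) = cod g"
    using assms length_interp by auto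
  have "insertion (\<lambda>i. ?fg ! i) p = insertion (\<lambda>i. interp f ! i) p" if "p \<in> set (interp h)" for p
    by (rule insertion_interp_cong[OF \<open>wt h\<close> that]) (use assms lf in \<open>simp add: nth_append\<close>)
  moreover have "insertion (\<lambda>i. ?fg ! (i + dom h)) q
      = insertion (\<lambda>i. insertion (\<lambda>i. PVar (i + dom f)) (interp g ! i)) q"
    if "q \<in> set (interp k)" for q
    by (rule insertion_interp_cong[OF \<open>wt k\<close> that]) (use assms lf lg in \<open>simp add: nth_append\<close>)
  ultimately show ?thesis by (simp add: insertion_insertion)
qed

lemma map_nth_append_swap:
  assumes "length xs = p" "length ys = q"
  shows "map (\<lambda>i. (xs @ ys) ! i) ([p..<p + q] @ [0..<p]) = ys @ xs"
proof -
  have "[p..<p + q] = map (\<lambda>i. i + p) [0..<q]"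
    by (subst map_add_upt) (simp add: add.commute)
  then have "map (\<lambda>i. (xs @ ys) ! i) [p..<p + q] = ys"
    using assms by (simp add: nth_append o_def map_nth)
  moreover have "map (\<lambda>i. (xs @ ys) ! i) [0..<p] = map (\<lambda>i. xs ! i) [0..<p]"
    using assms by (intro map_cong) (simp_all add: nth_append)
  ultimately show ?thesis using assms by simp
qed

lemma interp_sw_natural:
  assumes "wt f" "wt g"
  shows "interp (Comp (Tensor f g) (Sw (cod f) (cod g))) = interp (Comp (Sw (dom f) (dom g)) (Tensor g f))"
proof -
  let ?L = "[dom f..<dom f + dom g] @ [0..<dom f]"
  have "interp (Comp (Tensor f g) (Sw (cod f) (cod g)))
      = map (insertion (\<lambda>i. PVar (i + dom f))) (interp g) @ interp f"
    using map_nth_append_swap[of "interp f" "cod f" "map (insertion (\<lambda>i. PVar (i + dom f))) (interp g)"]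
      assms length_interp by (simp add: o_def)
  moreover have "insertion (\<lambda>i. map PVar ?L ! i) q = insertion (\<lambda>i. PVar (i + dom f)) q"
    if "q \<in> set (interp g)" for q
    by (rule insertion_interp_cong[OF \<open>wt g\<close> that]) (simp add: nth_append add.commute)
  moreover have "insertion (\<lambda>i. map PVar ?L ! (i + dom g)) p = insertion PVar p"
    if "p \<in> set (interp f)" for p
    by (rule insertion_interp_cong[OF \<open>wt f\<close> that]) (simp add: nth_append)
  ultimately show ?thesis
    by (simp add: insertion_insertion map_idI)
qed

lemma interp_copy_natural:
  assumes "wt f"
  shows "interp (Comp f (copy_n (cod f))) = interp (Comp (copy_n (dom f)) (Tensor f f))"
proof -
  let ?L = "[0..<dom f] @ [0..<dom f]"
  have "interp (Comp f (copy_n (cod f))) = interp f @ interp f"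
    using assms length_interp by (simp add: interp_copy_n o_def map_nth)
  moreover have "insertion (\<lambda>i. map PVar ?L ! i) p = insertion PVar p" if "p \<in> set (interp f)" for p
    by (rule insertion_interp_cong[OF assms that]) (simp add: nth_append)
  moreover have "insertion (\<lambda>i. map PVar ?L ! (i + dom f)) p = insertion PVar p"
    if "p \<in> set (interp f)" for p
    by (rule insertion_interp_cong[OF assms that]) (simp add: nth_append)
  ultimately show ?thesis
    by (simp add: interp_copy_n insertion_insertion map_idI del: upt_Suc)
qed

lemma soundness: "eqA f g \<Longrightarrow> interp f = interp g"
proof (induction rule: eqA.induct)
  case (tensor_cong f f' g g')
  then show ?case using eqA_wtD(3)[OF tensor_cong(1)] by simp
next
  case (id_left f) then show ?case by (rule interp_id_left)
next
  case (id_right f) then show ?case by (rule interp_id_right)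
next
  case (comp_assoc f g h) then show ?case by (rule interp_comp_assoc)
next
  case (tensor_assoc f g h) show ?case by (rule interp_tensor_assoc)
next
  case (tensor_id m n) show ?case by (simp add: map_upt_add)
next
  case (interchange f g h k) then show ?case by (rule interp_interchange)
next
  case (sw_inv a b) show ?case
    by (rule wiring_interp_eq[OF wiring_Comp[OF wiring_Sw wiring_Sw] wiring_Id]) auto
next
  case (sw_zero_right a) show ?case
    by (rule wiring_interp_eq[OF wiring_Sw wiring_Id]) auto
next
  case (sw_zero_left a) show ?case
    by (rule wiring_interp_eq[OF wiring_Sw wiring_Id]) auto
next
  case (sw_hex_left a b c) show ?case
    by (rule wiring_interp_eq[OF wiring_Sw
          wiring_Comp[OF wiring_Tensor[OF wiring_Id wiring_Sw] wiring_Tensor[OF wiring_Sw wiring_Id]]]) auto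
next
  case (sw_hex_right a b c) show ?case
    by (rule wiring_interp_eq[OF wiring_Sw
          wiring_Comp[OF wiring_Tensor[OF wiring_Sw wiring_Id] wiring_Tensor[OF wiring_Id wiring_Sw]]]) auto
next
  case (sw_natural f g) then show ?case by (rule interp_sw_natural)
next
  case (copy_natural f) then show ?case by (rule interp_copy_natural)
next
  case distrib show ?case
    by (simp add: eval_nat_numeral insertion_add insertion_mult ring_distribs)
qed (simp_all add: eval_nat_numeral insertion_add insertion_mult ac_simps map_idI)

section \<open>The free category modulo A\<close>

lemma eqA_part_equivp: "part_equivp eqA"
proof (rule part_equivpI)
  show "\<exists>x. eqA x x" by (rule exI[of _ "Id 0"]) (rule eqA.refl, simp)
  show "symp eqA" by (rule sympI) (rule eqA.sym)
  show "transp eqA" by (rule transpI) (rule eqA.trans)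
qed

quotient_type mor = circ / partial: eqA
  morphisms rep_mor abs_mor
  by (rule eqA_part_equivp)

lift_definition mdom :: "mor \<Rightarrow> nat" is dom by (simp add: eqA_wtD)
lift_definition mcod :: "mor \<Rightarrow> nat" is cod by (simp add: eqA_wtD)
lift_definition mcomp :: "mor \<Rightarrow> mor \<Rightarrow> mor" (infixl \<open>;;\<close> 55)
  is "\<lambda>f g. if cod f = dom g then Comp f g else Id 0"
  by (auto simp: eqA_wtD intro: eqA.comp_cong eqA.refl)
lift_definition mtens :: "mor \<Rightarrow> mor \<Rightarrow> mor" (infixr \<open>\<otimes>\<close> 65) is Tensor
  by (rule eqA.tensor_cong)
lift_definition mid :: "nat \<Rightarrow> mor" is Id by (rule eqA.refl) simp
lift_definition msw :: "nat \<Rightarrow> nat \<Rightarrow> mor" is Sw by (rule eqA.refl) simp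
lift_definition mgen :: "gen \<Rightarrow> mor" is G by (rule eqA.refl) simp
lift_definition mdisc :: "nat \<Rightarrow> mor" is discard_n by (rule eqA.refl) simp
lift_definition mcopy :: "nat \<Rightarrow> mor" is copy_n by (rule eqA.refl) simp
lift_definition minterp :: "mor \<Rightarrow> mpoly list" is interp by (rule soundness)

lemma mdom_simps [simp]:
  "mdom (f ;; g) = (if mcod f = mdom g then mdom f else 0)"
  "mdom (f \<otimes> g) = mdom f + mdom g"
  "mdom (mid n) = n" "mdom (msw a b) = a + b" "mdom (mgen x) = gdom x"
  "mdom (mdisc n) = n" "mdom (mcopy n) = n"
  by (transfer, simp)+

lemma mcod_simps [simp]:
  "mcod (f ;; g) = (if mcod f = mdom g then mcod g else 0)"
  "mcod (f \<otimes> g) = mcod f + mcod g"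
  "mcod (mid n) = n" "mcod (msw a b) = b + a" "mcod (mgen x) = gcod x"
  "mcod (mdisc n) = 0" "mcod (mcopy n) = n + n"
  by (transfer, simp)+

lemma mdisc_simps:
  "mdisc 0 = mid 0"
  "mdisc (Suc n) = mgen Discard \<otimes> mdisc n"
  by (transfer, simp add: eqA.refl)+

text \<open>The simplifier normalises \<open>1::nat\<close> to \<open>Suc 0\<close>; laws that mention \<open>1\<close> are stored in
  that form by \<open>[simplified]\<close>.\<close>

lemma mcopy_simps [simplified]:
  "mcopy 0 = mid 0"
  "mcopy (Suc n) = (mgen Copy \<otimes> mcopy n) ;; ((mid 1 \<otimes> msw 1 n) \<otimes> mid n)"
  by (transfer, simp add: eqA.refl)+

lemma abs_mor_simps:
  "wt f \<Longrightarrow> mdom (abs_mor f) = dom f"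
  "wt f \<Longrightarrow> mcod (abs_mor f) = cod f"
  "wt f \<Longrightarrow> wt g \<Longrightarrow> cod f = dom g \<Longrightarrow> abs_mor (Comp f g) = abs_mor f ;; abs_mor g"
  "wt f \<Longrightarrow> wt g \<Longrightarrow> abs_mor (Tensor f g) = abs_mor f \<otimes> abs_mor g"
  "abs_mor (Id n) = mid n"
  "abs_mor (Sw a b) = msw a b"
  "abs_mor (G x) = mgen x"
  by (simp_all add: mdom.abs_eq mcod.abs_eq mcomp.abs_eq mtens.abs_eq mid.abs_eq msw.abs_eq
      mgen.abs_eq eqA.refl)

lemma abs_mor_eq_iff: "wt f \<Longrightarrow> wt g \<Longrightarrow> abs_mor f = abs_mor g \<longleftrightarrow> eqA f g"
  using Quotient_rel[OF Quotient_mor] eqA.refl by blast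

lemma mid_mcomp [simp]: "mdom f = n \<Longrightarrow> mid n ;; f = f"
  by transfer (auto intro: eqA.id_left dest: eqA_wtD)

lemma mcomp_mid [simp]: "mcod f = n \<Longrightarrow> f ;; mid n = f"
  by transfer (auto intro: eqA.id_right dest: eqA_wtD)

lemma mcomp_assoc: "mcod f = mdom g \<Longrightarrow> mcod g = mdom h \<Longrightarrow> f ;; g ;; h = f ;; (g ;; h)"
  by transfer (auto intro: eqA.comp_assoc dest: eqA_wtD)

lemma mtens_assoc: "(f \<otimes> g) \<otimes> h = f \<otimes> (g \<otimes> h)"
  by transfer (auto intro: eqA.tensor_assoc dest: eqA_wtD)

lemma mid0_mtens [simp]: "mid 0 \<otimes> f = f"
  by transfer (auto intro: eqA.tensor_unit_left dest: eqA_wtD)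

lemma mtens_mid0 [simp]: "f \<otimes> mid 0 = f"
  by transfer (auto intro: eqA.tensor_unit_right dest: eqA_wtD)

lemma mtens_mid: "mid m \<otimes> mid n = mid (m + n)"
  by transfer (rule eqA.tensor_id)

lemma interchange:
  "mcod f = mdom h \<Longrightarrow> mcod g = mdom k \<Longrightarrow> (f \<otimes> g) ;; (h \<otimes> k) = (f ;; h) \<otimes> (g ;; k)"
  by transfer (auto intro: eqA.interchange dest: eqA_wtD)

lemma msw_0_right [simp]: "msw a 0 = mid a"
  by transfer (rule eqA.sw_zero_right)

lemma msw_0_left [simp]: "msw 0 a = mid a"
  by transfer (rule eqA.sw_zero_left)

lemma msw_natural: "(f \<otimes> g) ;; msw (mcod f) (mcod g) = msw (mdom f) (mdom g) ;; (g \<otimes> f)"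
  by transfer (auto intro: eqA.sw_natural dest: eqA_wtD)

lemma mcopy_natural: "f ;; mcopy (mcod f) = mcopy (mdom f) ;; (f \<otimes> f)"
  by transfer (auto intro: eqA.copy_natural dest: eqA_wtD)

lemma mdisc_natural: "f ;; mdisc (mcod f) = mdisc (mdom f)"
  by transfer (auto intro: eqA.discard_natural dest: eqA_wtD)

lemma copy_comm [simplified]: "mgen Copy ;; msw 1 1 = mgen Copy"
  by transfer (simp add: eqA.copy_comm[simplified])

lemma copy_counit_left [simplified]: "mgen Copy ;; (mgen Discard \<otimes> mid 1) = mid 1"
  by transfer (simp add: eqA.copy_unit[simplified])

lemma add_comm [simplified]: "msw 1 1 ;; mgen Add = mgen Add"
  by transfer (simp add: eqA.add_comm[simplified])

lemma add_assoc [simplified]: "(mgen Add \<otimes> mid 1) ;; mgen Add = (mid 1 \<otimes> mgen Add) ;; mgen Add"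
  by transfer (simp add: eqA.add_assoc[simplified])

lemma add_unit [simplified]: "(mgen Zero \<otimes> mid 1) ;; mgen Add = mid 1"
  by transfer (simp add: eqA.add_unit_left[simplified])

lemma and_comm [simplified]: "msw 1 1 ;; mgen And = mgen And"
  by transfer (simp add: eqA.and_comm[simplified])

lemma and_assoc [simplified]: "(mgen And \<otimes> mid 1) ;; mgen And = (mid 1 \<otimes> mgen And) ;; mgen And"
  by transfer (simp add: eqA.and_assoc[simplified])

lemma and_unit [simplified]: "(mgen One \<otimes> mid 1) ;; mgen And = mid 1"
  by transfer (simp add: eqA.and_unit_left[simplified])

lemma copy_add [simplified]: "mgen Copy ;; mgen Add = mgen Discard ;; mgen Zero"
  by transfer (simp add: eqA.copy_add[simplified])

lemma and_add_distrib [simplified]: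
  "(mid 1 \<otimes> mgen Add) ;; mgen And
     = (mgen Copy \<otimes> mid 2) ;; ((mid 1 \<otimes> msw 1 1) \<otimes> mid 1) ;; (mgen And \<otimes> mgen And) ;; mgen Add"
  by transfer (simp add: eqA.distrib[simplified])

section \<open>Cartesian structure\<close>

lemma mdisc_unique: "mcod f = 0 \<Longrightarrow> f = mdisc (mdom f)"
  by (metis mdisc_natural mcomp_mid mdisc_simps(1))

lemma mdisc_add: "mdisc (m + n) = mdisc m \<otimes> mdisc n"
  using mdisc_unique[of "mdisc m \<otimes> mdisc n"] by simp

lemma mdisc_1 [simplified]: "mdisc 1 = mgen Discard"
  by (simp add: mdisc_simps)

lemma mcopy_1 [simplified]: "mcopy 1 = mgen Copy"
  by (simp add: mcopy_simps mtens_mid)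

lemma copy_counit_right [simplified]: "mgen Copy ;; (mid 1 \<otimes> mgen Discard) = mid 1"
proof -
  have "msw 1 1 ;; (mid 1 \<otimes> mgen Discard) = mgen Discard \<otimes> mid 1"
    using msw_natural[of "mgen Discard" "mid 1"] by simp
  then have "mgen Copy ;; msw 1 1 ;; (mid 1 \<otimes> mgen Discard) = mid 1"
    by (simp add: mcomp_assoc copy_counit_left)
  then show ?thesis using copy_comm by simp
qed

lemma mcopy_Suc_mcomp:
  assumes "mdom A = 1" "mdom B = n" "mdom C = 1" "mdom D = n"
    and "msw 1 n ;; (B \<otimes> C) = C \<otimes> B"
  shows "mcopy (Suc n) ;; ((A \<otimes> B) \<otimes> (C \<otimes> D)) = (mgen Copy ;; (A \<otimes> C)) \<otimes> (mcopy n ;; (B \<otimes> D))"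
proof -
  have "((mid 1 \<otimes> msw 1 n) \<otimes> mid n) ;; ((A \<otimes> B) \<otimes> (C \<otimes> D))
      = (mid 1 \<otimes> (msw 1 n \<otimes> mid n)) ;; (A \<otimes> ((B \<otimes> C) \<otimes> D))"
    by (simp add: mtens_assoc)
  also have "\<dots> = A \<otimes> ((C \<otimes> B) \<otimes> D)"
    using assms by (simp add: interchange)
  also have "\<dots> = (A \<otimes> C) \<otimes> (B \<otimes> D)"
    by (simp add: mtens_assoc)
  finally show ?thesis
    using assms by (simp add: mcopy_simps mcomp_assoc interchange)
qed

lemma mcopy_counit_right: "mcopy n ;; (mid n \<otimes> mdisc n) = mid n"
proof (induction n)
  case 0 then show ?case by (simp add: mcopy_simps mdisc_simps)
next
  case (Suc n)
  have "msw 1 n ;; (mid n \<otimes> mgen Discard) = mgen Discard \<otimes> mid n"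
    using msw_natural[of "mgen Discard" "mid n"] by simp
  then have "mcopy (Suc n) ;; ((mid 1 \<otimes> mid n) \<otimes> (mgen Discard \<otimes> mdisc n)) = mid 1 \<otimes> mid n"
    using mcopy_Suc_mcomp[where A = "mid 1" and B = "mid n" and C = "mgen Discard" and D = "mdisc n"]
    by (simp add: Suc copy_counit_right)
  then show ?case
    by (simp add: mdisc_simps mtens_mid)
qed

lemma mcopy_counit_left: "mcopy n ;; (mdisc n \<otimes> mid n) = mid n"
proof (induction n)
  case 0 then show ?case by (simp add: mcopy_simps mdisc_simps)
next
  case (Suc n)
  have "msw 1 n ;; (mdisc n \<otimes> mid 1) = mid 1 \<otimes> mdisc n"
    using msw_natural[of "mid 1" "mdisc n"] by simp
  then have "mcopy (Suc n) ;; ((mgen Discard \<otimes> mdisc n) \<otimes> (mid 1 \<otimes> mid n)) = mid 1 \<otimes> mid n"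
    using mcopy_Suc_mcomp[where A = "mgen Discard" and B = "mdisc n" and C = "mid 1" and D = "mid n"]
    by (simp add: Suc copy_counit_left)
  then show ?case
    by (simp add: mdisc_simps mtens_mid)
qed

definition Hom :: "nat \<Rightarrow> nat \<Rightarrow> mor set" where
  "Hom n m = {f. mdom f = n \<and> mcod f = m}"

lemma mem_Hom [simp]: "f \<in> Hom n m \<longleftrightarrow> mdom f = n \<and> mcod f = m"
  by (simp add: Hom_def)

definition pair :: "nat \<Rightarrow> mor \<Rightarrow> mor \<Rightarrow> mor" where
  "pair n A B = mcopy n ;; (A \<otimes> B)"

definition proj :: "nat \<Rightarrow> nat \<Rightarrow> mor" where
  "proj n j = mdisc j \<otimes> mid 1 \<otimes> mdisc (n - Suc j)"

fun tuple :: "nat \<Rightarrow> mor list \<Rightarrow> mor" where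
  "tuple n [] = mdisc n"
| "tuple n (X # Xs) = pair n X (tuple n Xs)"

lemma pair_dom_cod [simp]:
  "mdom A = n \<Longrightarrow> mdom B = n \<Longrightarrow> mdom (pair n A B) = n"
  "mdom A = n \<Longrightarrow> mdom B = n \<Longrightarrow> mcod (pair n A B) = mcod A + mcod B"
  by (simp_all add: pair_def)

lemma proj_dom_cod [simp]:
  "j < n \<Longrightarrow> mdom (proj n j) = n"
  "mcod (proj n j) = 1"
  by (simp_all add: proj_def)

lemma tuple_dom_cod [simp]:
  "\<forall>X\<in>set Xs. mdom X = n \<Longrightarrow> mdom (tuple n Xs) = n"
  "\<forall>X\<in>set Xs. mdom X = n \<Longrightarrow> mcod (tuple n Xs) = sum_list (map mcod Xs)"
  by (induction Xs) auto

lemma mcomp_pair: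
  assumes "mdom A = mcod h" "mdom B = mcod h"
  shows "h ;; pair (mcod h) A B = pair (mdom h) (h ;; A) (h ;; B)"
proof -
  have "h ;; pair (mcod h) A B = h ;; mcopy (mcod h) ;; (A \<otimes> B)"
    unfolding pair_def using assms by (simp add: mcomp_assoc)
  also have "\<dots> = mcopy (mdom h) ;; ((h ;; A) \<otimes> (h ;; B))"
    using assms by (simp add: mcopy_natural mcomp_assoc interchange)
  finally show ?thesis by (simp add: pair_def)
qed

lemma pair_mcomp_mtens:
  assumes "mdom A = n" "mdom B = n" "mcod A = mdom X" "mcod B = mdom Y"
  shows "pair n A B ;; (X \<otimes> Y) = pair n (A ;; X) (B ;; Y)"
  unfolding pair_def using assms by (simp add: mcomp_assoc interchange)

lemma mcomp_copy_eq_pair: "A \<in> Hom n 1 \<Longrightarrow> A ;; mgen Copy = pair n A A"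
  using mcopy_natural[of A] by (simp add: mcopy_1 pair_def)

lemma mtens_mdisc_eq_mcomp: "A \<otimes> mdisc k = (mid (mdom A) \<otimes> mdisc k) ;; A"
proof -
  have "(mid (mdom A) \<otimes> mdisc k) ;; (A \<otimes> mid 0) = A \<otimes> mdisc k"
    by (subst interchange) simp_all
  then show ?thesis by simp
qed

lemma mdisc_mtens_eq_mcomp: "mdisc k \<otimes> A = (mdisc k \<otimes> mid (mdom A)) ;; A"
proof -
  have "(mdisc k \<otimes> mid (mdom A)) ;; (mid 0 \<otimes> A) = mdisc k \<otimes> A"
    by (subst interchange) simp_all
  then show ?thesis by simp
qed

lemma pair_mdisc_right:
  assumes "mdom A = n"
  shows "pair n A (mdisc n) = A"
proof -
  have "pair n A (mdisc n) = mcopy n ;; (mid n \<otimes> mdisc n) ;; A"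
    unfolding pair_def using assms mtens_mdisc_eq_mcomp[of A n] by (simp add: mcomp_assoc)
  then show ?thesis using assms by (simp add: mcopy_counit_right)
qed

lemma pair_mdisc_left:
  assumes "mdom A = n"
  shows "pair n (mdisc n) A = A"
proof -
  have "pair n (mdisc n) A = mcopy n ;; (mdisc n \<otimes> mid n) ;; A"
    unfolding pair_def using assms mdisc_mtens_eq_mcomp[of n A] by (simp add: mcomp_assoc)
  then show ?thesis using assms by (simp add: mcopy_counit_left)
qed

lemma proj_add_left: "j < p \<Longrightarrow> proj (p + q) j = proj p j \<otimes> mdisc q"
proof -
  assume "j < p"
  then have "p + q - Suc j = (p - Suc j) + q" by simp
  then show ?thesis unfolding proj_def by (simp add: mtens_assoc mdisc_add)
qed

lemma proj_add_right: "proj (p + q) (p + j) = mdisc p \<otimes> proj q j"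
  unfolding proj_def by (simp add: mtens_assoc mdisc_add)

lemma pair_proj:
  assumes "X \<in> Hom n p" "Y \<in> Hom n q" "j < p + q"
  shows "pair n X Y ;; proj (p + q) j = (if j < p then X ;; proj p j else Y ;; proj q (j - p))"
proof (cases "j < p")
  case True
  then have "pair n X Y ;; proj (p + q) j = pair n (X ;; proj p j) (Y ;; mdisc q)"
    using assms by (simp add: proj_add_left pair_mcomp_mtens)
  then show ?thesis
    using assms True mdisc_natural[of Y] by (simp add: pair_mdisc_right)
next
  case False
  then obtain i where "j = p + i" "i < q"
    using assms(3) le_Suc_ex by force
  then have "pair n X Y ;; proj (p + q) j = pair n (X ;; mdisc p) (Y ;; proj q (j - p))"
    using assms by (simp add: proj_add_right pair_mcomp_mtens)
  then show ?thesis
    using assms False mdisc_natural[of X] by (simp add: pair_mdisc_left)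
qed

lemma mcomp_tuple:
  "\<forall>X\<in>set Xs. mdom X = mcod h \<Longrightarrow> h ;; tuple (mcod h) Xs = tuple (mdom h) (map (\<lambda>X. h ;; X) Xs)"
  by (induction Xs) (simp_all add: mdisc_natural mcomp_pair)

lemma proj_Suc: "j < n \<Longrightarrow> proj (Suc n) (Suc j) = (mgen Discard \<otimes> mid n) ;; proj n j"
  using proj_add_right[of 1 n j] mdisc_mtens_eq_mcomp[of 1 "proj n j"] by (simp add: mdisc_1)

lemma pair_proj0_mid: "pair (Suc n) (mid 1 \<otimes> mdisc n) (mgen Discard \<otimes> mid n) = mid (Suc n)"
proof -
  have "msw 1 n ;; (mdisc n \<otimes> mgen Discard) = mgen Discard \<otimes> mdisc n"
    using mdisc_unique[of "msw 1 n ;; (mdisc n \<otimes> mgen Discard)"] by (simp add: mdisc_simps)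
  then have "pair (Suc n) (mid 1 \<otimes> mdisc n) (mgen Discard \<otimes> mid n) = mid 1 \<otimes> mid n"
    using mcopy_Suc_mcomp[where A = "mid 1" and B = "mdisc n" and C = "mgen Discard" and D = "mid n"]
    by (simp add: pair_def copy_counit_right mcopy_counit_left)
  then show ?thesis by (simp add: mtens_mid)
qed

lemma mid_eq_tuple_proj: "mid n = tuple n (map (proj n) [0..<n])"
proof (induction n)
  case 0 then show ?case by (simp add: mdisc_simps)
next
  case (Suc n)
  let ?h = "mgen Discard \<otimes> mid n"
  have projs: "map (proj (Suc n)) [0..<Suc n] = proj (Suc n) 0 # map (\<lambda>X. ?h ;; X) (map (proj n) [0..<n])"
    by (simp add: upt_conv_Cons proj_Suc flip: map_Suc_upt del: upt_Suc)
  have tail: "tuple (Suc n) (map (\<lambda>X. ?h ;; X) (map (proj n) [0..<n])) = ?h"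
    using mcomp_tuple[of "map (proj n) [0..<n]" ?h] by (simp flip: Suc.IH)
  have head: "proj (Suc n) 0 = mid 1 \<otimes> mdisc n"
    by (simp add: proj_def mdisc_simps)
  show ?case by (simp only: projs tuple.simps tail head pair_proj0_mid)
qed

lemma mor_eqI_proj:
  assumes "f \<in> Hom n m" "g \<in> Hom n m" "\<And>j. j < m \<Longrightarrow> f ;; proj m j = g ;; proj m j"
  shows "f = g"
proof -
  let ?P = "map (proj m) [0..<m]"
  have "f = tuple n (map (\<lambda>X. f ;; X) ?P)"
    using assms mcomp_tuple[of ?P f] by (simp flip: mid_eq_tuple_proj)
  also have "map (\<lambda>X. f ;; X) ?P = map (\<lambda>X. g ;; X) ?P"
    using assms(3) by simp
  also have "tuple n \<dots> = g"
    using assms mcomp_tuple[of ?P g] by (simp flip: mid_eq_tuple_proj)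
  finally show ?thesis .
qed

lemma msw_proj:
  assumes "j < b + a"
  shows "msw a b ;; proj (b + a) j = (if j < b then proj (a + b) (a + j) else proj (a + b) (j - b))"
proof (cases "j < b")
  case True
  then have "(mdisc a \<otimes> proj b j) ;; msw 0 1 = msw a b ;; (proj b j \<otimes> mdisc a)"
    using msw_natural[of "mdisc a" "proj b j"] by simp
  then show ?thesis using True by (simp add: proj_add_left proj_add_right)
next
  case False
  then obtain i where i: "j = b + i" "i < a"
    using assms le_Suc_ex by force
  then have "(proj a i \<otimes> mdisc b) ;; msw 1 0 = msw a b ;; (mdisc b \<otimes> proj a i)"
    using msw_natural[of "proj a i" "mdisc b"] by simp
  then show ?thesis using i by (simp add: proj_add_left proj_add_right)
qed

lemma pair_msw:
  assumes "A \<in> Hom n p" "B \<in> Hom n q"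
  shows "pair n A B ;; msw p q = pair n B A"
proof (rule mor_eqI_proj)
  fix j assume "j < q + p"
  then show "pair n A B ;; msw p q ;; proj (q + p) j = pair n B A ;; proj (q + p) j"
    using assms by (auto simp: mcomp_assoc msw_proj pair_proj)
qed (use assms in simp_all)

lemma pair_assoc:
  assumes "X \<in> Hom n p" "Y \<in> Hom n q" "Z \<in> Hom n r"
  shows "pair n (pair n X Y) Z = pair n X (pair n Y Z)"
proof (rule mor_eqI_proj)
  fix j assume "j < p + q + r"
  then show "pair n (pair n X Y) Z ;; proj (p + q + r) j = pair n X (pair n Y Z) ;; proj (p + q + r) j"
    using assms pair_proj[of "pair n X Y" n "p + q" Z r j] pair_proj[of X n p "pair n Y Z" "q + r" j]
    by (auto simp: pair_proj add.assoc)
qed (use assms in \<open>simp_all add: add.assoc\<close>)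

section \<open>The ring of morphisms with one output\<close>

definition madd :: "nat \<Rightarrow> mor \<Rightarrow> mor \<Rightarrow> mor" where
  "madd n A B = pair n A B ;; mgen Add"

definition mmul :: "nat \<Rightarrow> mor \<Rightarrow> mor \<Rightarrow> mor" where
  "mmul n A B = pair n A B ;; mgen And"

definition mzero :: "nat \<Rightarrow> mor" where
  "mzero n = mdisc n ;; mgen Zero"

definition mone :: "nat \<Rightarrow> mor" where
  "mone n = mdisc n ;; mgen One"

lemma madd_dom_cod [simp]:
  "A \<in> Hom n 1 \<Longrightarrow> B \<in> Hom n 1 \<Longrightarrow> mdom (madd n A B) = n"
  "A \<in> Hom n 1 \<Longrightarrow> B \<in> Hom n 1 \<Longrightarrow> mcod (madd n A B) = 1"
  by (simp_all add: madd_def)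

lemma mmul_dom_cod [simp]:
  "A \<in> Hom n 1 \<Longrightarrow> B \<in> Hom n 1 \<Longrightarrow> mdom (mmul n A B) = n"
  "A \<in> Hom n 1 \<Longrightarrow> B \<in> Hom n 1 \<Longrightarrow> mcod (mmul n A B) = 1"
  by (simp_all add: mmul_def)

lemma mzero_dom_cod [simp]: "mdom (mzero n) = n" "mcod (mzero n) = 1"
  by (simp_all add: mzero_def)

lemma mone_dom_cod [simp]: "mdom (mone n) = n" "mcod (mone n) = 1"
  by (simp_all add: mone_def)

lemma pair_mcomp_comm:
  assumes "A \<in> Hom n 1" "B \<in> Hom n 1" "msw 1 1 ;; g = g" "mdom g = 2"
  shows "pair n A B ;; g = pair n B A ;; g"
proof -
  have "pair n A B ;; g = pair n A B ;; msw 1 1 ;; g"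
    using assms by (simp add: mcomp_assoc)
  then show ?thesis using assms by (simp add: pair_msw)
qed

lemma pair_mcomp_assoc:
  assumes "A \<in> Hom n 1" "B \<in> Hom n 1" "C \<in> Hom n 1" "g \<in> Hom 2 1"
    and "(g \<otimes> mid 1) ;; g = (mid 1 \<otimes> g) ;; g"
  shows "pair n (pair n A B ;; g) C ;; g = pair n A (pair n B C ;; g) ;; g"
proof -
  have "pair n (pair n A B ;; g) C ;; g = pair n (pair n A B) C ;; ((g \<otimes> mid 1) ;; g)"
    using assms(1-4) by (simp add: pair_mcomp_mtens flip: mcomp_assoc)
  also have "\<dots> = pair n A (pair n B C) ;; ((mid 1 \<otimes> g) ;; g)"
    using assms by (simp only: pair_assoc mem_Hom)
  also have "\<dots> = pair n A (pair n B C ;; g) ;; g"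
    using assms(1-4) by (simp add: pair_mcomp_mtens flip: mcomp_assoc)
  finally show ?thesis .
qed

lemma pair_mcomp_unit:
  assumes "A \<in> Hom n 1" "u \<in> Hom 0 1" "g \<in> Hom 2 1" "(u \<otimes> mid 1) ;; g = mid 1"
  shows "pair n (mdisc n ;; u) A ;; g = A"
proof -
  have "pair n (mdisc n ;; u) A ;; g = pair n (mdisc n) A ;; ((u \<otimes> mid 1) ;; g)"
    using assms(1-3) by (simp add: pair_mcomp_mtens flip: mcomp_assoc)
  then show ?thesis using assms by (simp add: pair_mdisc_left)
qed

lemma madd_comm: "A \<in> Hom n 1 \<Longrightarrow> B \<in> Hom n 1 \<Longrightarrow> madd n A B = madd n B A"
  unfolding madd_def by (rule pair_mcomp_comm) (simp_all add: add_comm)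

lemma mmul_comm: "A \<in> Hom n 1 \<Longrightarrow> B \<in> Hom n 1 \<Longrightarrow> mmul n A B = mmul n B A"
  unfolding mmul_def by (rule pair_mcomp_comm) (simp_all add: and_comm)

lemma madd_assoc:
  "A \<in> Hom n 1 \<Longrightarrow> B \<in> Hom n 1 \<Longrightarrow> C \<in> Hom n 1 \<Longrightarrow> madd n (madd n A B) C = madd n A (madd n B C)"
  unfolding madd_def by (rule pair_mcomp_assoc) (simp_all add: add_assoc)

lemma mmul_assoc:
  "A \<in> Hom n 1 \<Longrightarrow> B \<in> Hom n 1 \<Longrightarrow> C \<in> Hom n 1 \<Longrightarrow> mmul n (mmul n A B) C = mmul n A (mmul n B C)"
  unfolding mmul_def by (rule pair_mcomp_assoc) (simp_all add: and_assoc)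

lemma mzero_madd: "A \<in> Hom n 1 \<Longrightarrow> madd n (mzero n) A = A"
  unfolding madd_def mzero_def by (rule pair_mcomp_unit) (simp_all add: add_unit)

lemma mone_mmul: "A \<in> Hom n 1 \<Longrightarrow> mmul n (mone n) A = A"
  unfolding mmul_def mone_def by (rule pair_mcomp_unit) (simp_all add: and_unit)

lemma madd_self:
  assumes "A \<in> Hom n 1"
  shows "madd n A A = mzero n"
proof -
  have "madd n A A = A ;; mgen Copy ;; mgen Add"
    using assms by (simp add: madd_def mcomp_copy_eq_pair)
  also have "\<dots> = A ;; mgen Discard ;; mgen Zero"
    using assms by (simp add: mcomp_assoc copy_add)
  also have "A ;; mgen Discard = mdisc n"
    using assms mdisc_natural[of A] by (simp add: mdisc_1)
  finally show ?thesis by (simp add: mzero_def)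
qed

lemma pair_duplicate_first:
  assumes "A \<in> Hom n 1" "B \<in> Hom n 1" "C \<in> Hom n 1"
  shows "pair n A (pair n B C) ;; (mgen Copy \<otimes> mid 2) ;; ((mid 1 \<otimes> msw 1 1) \<otimes> mid 1)
       = pair n (pair n A B) (pair n A C)"
proof -
  have "pair n A (pair n B C) ;; (mgen Copy \<otimes> mid 2) = pair n (pair n (pair n A A) B) C"
    using assms by (simp add: pair_mcomp_mtens mcomp_copy_eq_pair pair_assoc)
  moreover have "pair n (pair n (pair n A A) B) C ;; ((mid 1 \<otimes> msw 1 1) \<otimes> mid 1)
      = pair n (pair n (pair n A A) B ;; (mid 1 \<otimes> msw 1 1)) C"
    using assms by (simp add: pair_mcomp_mtens)
  moreover have "pair n (pair n A A) B ;; (mid 1 \<otimes> msw 1 1) = pair n (pair n A B) A"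
    using assms by (simp add: pair_assoc pair_mcomp_mtens pair_msw)
  ultimately show ?thesis
    using assms by (simp add: pair_assoc)
qed

lemma mmul_madd_distrib:
  assumes "A \<in> Hom n 1" "B \<in> Hom n 1" "C \<in> Hom n 1"
  shows "mmul n A (madd n B C) = madd n (mmul n A B) (mmul n A C)"
proof -
  have "mmul n A (madd n B C) = pair n A (pair n B C) ;; ((mid 1 \<otimes> mgen Add) ;; mgen And)"
    using assms by (simp add: mmul_def madd_def pair_mcomp_mtens flip: mcomp_assoc)
  also have "\<dots> = pair n (pair n A B) (pair n A C) ;; (mgen And \<otimes> mgen And) ;; mgen Add"
    using assms by (simp add: and_add_distrib mcomp_assoc flip: pair_duplicate_first)
  also have "\<dots> = madd n (mmul n A B) (mmul n A C)"
    using assms by (simp add: pair_mcomp_mtens madd_def mmul_def)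
  finally show ?thesis .
qed

lemma madd_mmul_distrib:
  assumes "A \<in> Hom n 1" "B \<in> Hom n 1" "C \<in> Hom n 1"
  shows "mmul n (madd n A B) C = madd n (mmul n A C) (mmul n B C)"
proof -
  have "mmul n (madd n A B) C = mmul n C (madd n A B)"
    using assms by (simp add: mmul_comm)
  also have "\<dots> = madd n (mmul n C A) (mmul n C B)"
    using assms(3,1,2) by (rule mmul_madd_distrib)
  finally show ?thesis
    using assms mmul_comm[of A n C] mmul_comm[of B n C] by simp
qed

lemma mcomp_pair_mcomp:
  assumes "A \<in> Hom m 1" "B \<in> Hom m 1" "mcod h = m" "mdom g = 2"
  shows "h ;; (pair m A B ;; g) = pair (mdom h) (h ;; A) (h ;; B) ;; g"
  using assms by (simp flip: mcomp_assoc mcomp_pair)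

lemma mcomp_madd:
  "A \<in> Hom m 1 \<Longrightarrow> B \<in> Hom m 1 \<Longrightarrow> mcod h = m \<Longrightarrow> h ;; madd m A B = madd (mdom h) (h ;; A) (h ;; B)"
  unfolding madd_def by (simp add: mcomp_pair_mcomp)

lemma mcomp_mmul:
  "A \<in> Hom m 1 \<Longrightarrow> B \<in> Hom m 1 \<Longrightarrow> mcod h = m \<Longrightarrow> h ;; mmul m A B = mmul (mdom h) (h ;; A) (h ;; B)"
  unfolding mmul_def by (simp add: mcomp_pair_mcomp)

lemma mcomp_mzero: "h ;; mzero (mcod h) = mzero (mdom h)"
  unfolding mzero_def by (simp add: mdisc_natural flip: mcomp_assoc)

lemma mcomp_mone: "h ;; mone (mcod h) = mone (mdom h)"
  unfolding mone_def by (simp add: mdisc_natural flip: mcomp_assoc)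

definition weaken :: "nat \<Rightarrow> nat \<Rightarrow> mor" where
  "weaken a k = mid a \<otimes> mdisc k"

definition pad :: "nat \<Rightarrow> mor \<Rightarrow> mor" where
  "pad n X = weaken (mdom X) (n - mdom X) ;; X"

lemma weaken_dom_cod [simp]: "mdom (weaken a k) = a + k" "mcod (weaken a k) = a"
  by (simp_all add: weaken_def)

lemma pad_dom_cod [simp]: "mdom X \<le> n \<Longrightarrow> mdom (pad n X) = n" "mcod (pad n X) = mcod X"
  by (simp_all add: pad_def)

lemma pad_mdom [simp]: "mdom X = n \<Longrightarrow> pad n X = X"
  by (auto simp: pad_def weaken_def mdisc_simps)

lemma weaken_weaken: "weaken (a + k) j ;; weaken a k = weaken a (k + j)"
proof -
  have "weaken (a + k) j ;; weaken a k = (mid a \<otimes> mid k \<otimes> mdisc j) ;; (mid a \<otimes> mdisc k)"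
    by (simp add: weaken_def mtens_assoc flip: mtens_mid)
  also have "\<dots> = mid a \<otimes> ((mid k \<otimes> mdisc j) ;; mdisc k)"
    by (simp add: interchange)
  also have "(mid k \<otimes> mdisc j) ;; mdisc k = mdisc (k + j)"
    using mdisc_unique[of "(mid k \<otimes> mdisc j) ;; mdisc k"] by simp
  finally show ?thesis by (simp add: weaken_def)
qed

lemma pad_pad: "mdom X \<le> m \<Longrightarrow> m \<le> n \<Longrightarrow> pad n (pad m X) = pad n X"
  using weaken_weaken[of "mdom X" "m - mdom X" "n - m"]
  by (simp add: pad_def mcomp_assoc[symmetric])

fun zeros :: "nat \<Rightarrow> mor" where
  "zeros 0 = mid 0"
| "zeros (Suc k) = mgen Zero \<otimes> zeros k"

lemma zeros_dom_cod [simp]: "mdom (zeros k) = 0" "mcod (zeros k) = k"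
  by (induction k) auto

text \<open>Padding has a left inverse, which feeds the extra inputs with constants.\<close>

lemma pad_inject:
  assumes "mdom X = d" "mdom Y = d" "d \<le> n" "pad n X = pad n Y"
  shows "X = Y"
proof -
  let ?s = "mid d \<otimes> zeros (n - d)"
  have "zeros (n - d) ;; mdisc (n - d) = mid 0"
    using mdisc_unique[of "zeros (n - d) ;; mdisc (n - d)"] by (simp add: mdisc_simps)
  then have "?s ;; weaken d (n - d) = mid d"
    by (simp add: weaken_def interchange)
  then have "?s ;; pad n Z = Z" if "mdom Z = d" for Z
    using that assms(3) by (simp add: pad_def flip: mcomp_assoc)
  then show ?thesis using assms by metis
qed

lemma pad_mcomp_pair:
  assumes "A \<in> Hom m 1" "B \<in> Hom m 1" "m \<le> n" "mdom g = 2"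
  shows "pad n (pair m A B ;; g) = pair n (pad n A) (pad n B) ;; g"
  using assms mcomp_pair_mcomp[of A m B "weaken m (n - m)" g] by (simp add: pad_def)

lemma pad_mzero: "m \<le> n \<Longrightarrow> pad n (mzero m) = mzero n"
  using mcomp_mzero[of "weaken m (n - m)"] by (simp add: pad_def)

lemma pad_mone: "m \<le> n \<Longrightarrow> pad n (mone m) = mone n"
  using mcomp_mone[of "weaken m (n - m)"] by (simp add: pad_def)

definition pad_eq :: "mor \<Rightarrow> mor \<Rightarrow> bool" where
  "pad_eq X Y \<longleftrightarrow> mcod X = 1 \<and> mcod Y = 1 \<and>
     pad (max (mdom X) (mdom Y)) X = pad (max (mdom X) (mdom Y)) Y"

lemma pad_eq_iff:
  assumes "mcod X = 1" "mcod Y = 1" "mdom X \<le> n" "mdom Y \<le> n"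
  shows "pad_eq X Y \<longleftrightarrow> pad n X = pad n Y"
proof -
  let ?m = "max (mdom X) (mdom Y)"
  have "pad n X = pad n Y \<longleftrightarrow> pad n (pad ?m X) = pad n (pad ?m Y)"
    using assms by (simp add: pad_pad)
  also have "\<dots> \<longleftrightarrow> pad ?m X = pad ?m Y"
    using assms pad_inject[of "pad ?m X" ?m "pad ?m Y" n] by auto
  finally show ?thesis using assms by (simp add: pad_eq_def)
qed

lemma pad_eq_part_equivp: "part_equivp pad_eq"
proof (rule part_equivpI)
  show "\<exists>X. pad_eq X X" by (rule exI[of _ "mgen Zero"]) (simp add: pad_eq_def)
  show "symp pad_eq" by (rule sympI) (auto simp: pad_eq_def max.commute)
  show "transp pad_eq"
  proof (rule transpI)
    fix X Y Z assume "pad_eq X Y" "pad_eq Y Z"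
    moreover have "mcod X = 1" "mcod Y = 1" "mcod Z = 1"
      using calculation by (simp_all add: pad_eq_def)
    ultimately show "pad_eq X Z"
      using pad_eq_iff[of _ _ "mdom X + mdom Y + mdom Z"] by simp
  qed
qed

definition pad_op :: "gen \<Rightarrow> mor \<Rightarrow> mor \<Rightarrow> mor" where
  "pad_op x X Y = (let n = max (mdom X) (mdom Y) in pair n (pad n X) (pad n Y) ;; mgen x)"

lemma pad_pad_op:
  assumes "mcod X = 1" "mcod Y = 1" "mdom X \<le> n" "mdom Y \<le> n" "gdom x = 2"
  shows "pad n (pad_op x X Y) = pair n (pad n X) (pad n Y) ;; mgen x"
  using assms by (simp add: pad_op_def Let_def pad_mcomp_pair pad_pad)

lemma pad_op_dom_cod:
  "mcod X = 1 \<Longrightarrow> mcod Y = 1 \<Longrightarrow> gdom x = 2 \<Longrightarrow> mdom (pad_op x X Y) = max (mdom X) (mdom Y)"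
  "mcod X = 1 \<Longrightarrow> mcod Y = 1 \<Longrightarrow> gdom x = 2 \<Longrightarrow> mcod (pad_op x X Y) = gcod x"
  by (simp_all add: pad_op_def Let_def)

lemma pad_eq_pad_op:
  assumes "pad_eq X X'" "pad_eq Y Y'" "gdom x = 2" "gcod x = 1"
  shows "pad_eq (pad_op x X Y) (pad_op x X' Y')"
proof -
  let ?n = "mdom X + mdom X' + mdom Y + mdom Y'"
  have cod: "mcod X = 1" "mcod X' = 1" "mcod Y = 1" "mcod Y' = 1"
    using assms by (simp_all add: pad_eq_def)
  then have "pad ?n X = pad ?n X'" "pad ?n Y = pad ?n Y'"
    using assms pad_eq_iff[of _ _ ?n] by simp_all
  then show ?thesis
    using assms cod pad_eq_iff[of "pad_op x X Y" "pad_op x X' Y'" ?n]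
    by (simp add: pad_op_dom_cod pad_pad_op)
qed

lemma pad_op_Hom: "A \<in> Hom n 1 \<Longrightarrow> B \<in> Hom n 1 \<Longrightarrow> pad_op x A B = pair n A B ;; mgen x"
  by (simp add: pad_op_def Let_def)

quotient_type mor1 = mor / partial: pad_eq
  morphisms rep_mor1 abs_mor1
  by (rule pad_eq_part_equivp)

lemma abs_mor1_eq_iff:
  assumes "mcod X = 1" "mcod Y = 1"
  shows "abs_mor1 X = abs_mor1 Y \<longleftrightarrow> pad_eq X Y"
proof -
  have "pad_eq X X" "pad_eq Y Y"
    using assms by (simp_all add: pad_eq_def)
  then show ?thesis using Quotient_rel[OF Quotient_mor1, of X Y] by blast
qed

lemma abs_mor1_pad: "mcod X = 1 \<Longrightarrow> mdom X \<le> n \<Longrightarrow> abs_mor1 (pad n X) = abs_mor1 X"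
  by (simp add: abs_mor1_eq_iff pad_eq_iff[of _ _ n] pad_pad)

lemma abs_mor1_inject: "A \<in> Hom n 1 \<Longrightarrow> B \<in> Hom n 1 \<Longrightarrow> abs_mor1 A = abs_mor1 B \<Longrightarrow> A = B"
  by (simp add: abs_mor1_eq_iff pad_eq_def)

lemma mor1_common_arity:
  obtains n A B C where "A \<in> Hom n 1" "B \<in> Hom n 1" "C \<in> Hom n 1"
    and "a = abs_mor1 A" "b = abs_mor1 B" "c = abs_mor1 C"
proof -
  have cod: "mcod (rep_mor1 t) = 1" and abs_rep: "abs_mor1 (rep_mor1 t) = t" for t
    using Quotient_rep_reflp[OF Quotient_mor1, of t] Quotient_abs_rep[OF Quotient_mor1, of t]
    by (simp_all add: pad_eq_def)
  let ?n = "mdom (rep_mor1 a) + mdom (rep_mor1 b) + mdom (rep_mor1 c)"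
  show thesis
    by (rule that[where n = ?n and A = "pad ?n (rep_mor1 a)" and B = "pad ?n (rep_mor1 b)"
          and C = "pad ?n (rep_mor1 c)"])
      (simp_all add: cod abs_rep abs_mor1_pad)
qed

lemma minterp_mgen: "minterp (mgen x) = ginterp x"
  by transfer simp

instantiation mor1 :: comm_ring_1
begin

lift_definition zero_mor1 :: mor1 is "mgen Zero" by (simp add: pad_eq_def)
lift_definition one_mor1 :: mor1 is "mgen One" by (simp add: pad_eq_def)
lift_definition plus_mor1 :: "mor1 \<Rightarrow> mor1 \<Rightarrow> mor1" is "pad_op Add" by (rule pad_eq_pad_op) simp_all
lift_definition minus_mor1 :: "mor1 \<Rightarrow> mor1 \<Rightarrow> mor1" is "pad_op Add" by (rule pad_eq_pad_op) simp_all
lift_definition times_mor1 :: "mor1 \<Rightarrow> mor1 \<Rightarrow> mor1" is "pad_op And" by (rule pad_eq_pad_op) simp_all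
lift_definition uminus_mor1 :: "mor1 \<Rightarrow> mor1" is "\<lambda>X. X" .

lemma abs_mor1_madd: "A \<in> Hom n 1 \<Longrightarrow> B \<in> Hom n 1 \<Longrightarrow> abs_mor1 (madd n A B) = abs_mor1 A + abs_mor1 B"
  by (simp add: plus_mor1.abs_eq pad_eq_def pad_op_Hom madd_def)

lemma abs_mor1_mmul: "A \<in> Hom n 1 \<Longrightarrow> B \<in> Hom n 1 \<Longrightarrow> abs_mor1 (mmul n A B) = abs_mor1 A * abs_mor1 B"
  by (simp add: times_mor1.abs_eq pad_eq_def pad_op_Hom mmul_def)

lemma abs_mor1_mzero: "abs_mor1 (mzero n) = 0"
  using abs_mor1_pad[of "mzero 0" n] pad_mzero[of 0 n]
  by (simp add: zero_mor1.abs_eq mzero_def mdisc_simps)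

lemma abs_mor1_mone: "abs_mor1 (mone n) = 1"
  using abs_mor1_pad[of "mone 0" n] pad_mone[of 0 n]
  by (simp add: one_mor1.abs_eq mone_def mdisc_simps)

instance
proof
  fix a b c :: mor1
  obtain n A B C where Hom: "A \<in> Hom n 1" "B \<in> Hom n 1" "C \<in> Hom n 1"
    and abs: "a = abs_mor1 A" "b = abs_mor1 B" "c = abs_mor1 C"
    by (rule mor1_common_arity)
  note simps = Hom[simplified] abs abs_mor1_madd abs_mor1_mmul abs_mor1_mzero abs_mor1_mone
  show "a + b + c = a + (b + c)"
    using arg_cong[OF madd_assoc[OF Hom], of abs_mor1] by (simp add: simps)
  show "a + b = b + a"
    using arg_cong[OF madd_comm[OF Hom(1,2)], of abs_mor1] by (simp add: simps)
  show "0 + a = a"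
    using arg_cong[OF mzero_madd[OF Hom(1)], of abs_mor1] by (simp add: simps)
  show "- a + a = 0"
    using arg_cong[OF madd_self[OF Hom(1)], of abs_mor1]
    by (simp add: simps uminus_mor1.abs_eq pad_eq_def)
  show "a - b = a + - b"
    by transfer (simp add: pad_eq_pad_op)
  show "a * b * c = a * (b * c)"
    using arg_cong[OF mmul_assoc[OF Hom], of abs_mor1] by (simp add: simps)
  show "a * b = b * a"
    using arg_cong[OF mmul_comm[OF Hom(1,2)], of abs_mor1] by (simp add: simps)
  show "1 * a = a"
    using arg_cong[OF mone_mmul[OF Hom(1)], of abs_mor1] by (simp add: simps)
  show "(a + b) * c = a * c + b * c"
    using arg_cong[OF madd_mmul_distrib[OF Hom], of abs_mor1] by (simp add: simps)
  show "(0::mor1) \<noteq> 1"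
  proof transfer
    show "\<not> pad_eq (mgen Zero) (mgen One)"
      using minterp_mgen[of Zero] minterp_mgen[of One] by (auto simp: pad_eq_def)
  qed
qed

end

instance mor1 :: char2
proof
  show "(1::mor1) + 1 = 0"
    using arg_cong[OF madd_self[of "mone 0" 0], of abs_mor1]
    by (simp add: abs_mor1_madd abs_mor1_mone abs_mor1_mzero)
qed

section \<open>Morphisms realising polynomials\<close>

fun msum :: "nat \<Rightarrow> mor list \<Rightarrow> mor" where
  "msum n [] = mzero n"
| "msum n (X # Xs) = madd n X (msum n Xs)"

fun mprod :: "nat \<Rightarrow> mor list \<Rightarrow> mor" where
  "mprod n [] = mone n"
| "mprod n (X # Xs) = mmul n X (mprod n Xs)"

lemma msum_dom_cod [simp]:
  "\<forall>X\<in>set Xs. X \<in> Hom n 1 \<Longrightarrow> mdom (msum n Xs) = n"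
  "\<forall>X\<in>set Xs. X \<in> Hom n 1 \<Longrightarrow> mcod (msum n Xs) = 1"
  by (induction Xs) auto

lemma mprod_dom_cod [simp]:
  "\<forall>X\<in>set Xs. X \<in> Hom n 1 \<Longrightarrow> mdom (mprod n Xs) = n"
  "\<forall>X\<in>set Xs. X \<in> Hom n 1 \<Longrightarrow> mcod (mprod n Xs) = 1"
  by (induction Xs) auto

lemma abs_mor1_msum: "\<forall>X\<in>set Xs. X \<in> Hom n 1 \<Longrightarrow> abs_mor1 (msum n Xs) = (\<Sum>X\<leftarrow>Xs. abs_mor1 X)"
  by (induction Xs) (simp_all add: abs_mor1_mzero abs_mor1_madd)

lemma abs_mor1_mprod: "\<forall>X\<in>set Xs. X \<in> Hom n 1 \<Longrightarrow> abs_mor1 (mprod n Xs) = (\<Prod>X\<leftarrow>Xs. abs_mor1 X)"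
  by (induction Xs) (simp_all add: abs_mor1_mone abs_mor1_mmul)

lemma mcomp_msum:
  "\<forall>X\<in>set Xs. X \<in> Hom (mcod h) 1 \<Longrightarrow> h ;; msum (mcod h) Xs = msum (mdom h) (map (\<lambda>X. h ;; X) Xs)"
  by (induction Xs) (simp_all add: mcomp_mzero mcomp_madd)

lemma mcomp_mprod:
  "\<forall>X\<in>set Xs. X \<in> Hom (mcod h) 1 \<Longrightarrow> h ;; mprod (mcod h) Xs = mprod (mdom h) (map (\<lambda>X. h ;; X) Xs)"
  by (induction Xs) (simp_all add: mcomp_mone mcomp_mmul)


definition monom_vars :: "(nat \<Rightarrow>\<^sub>0 nat) \<Rightarrow> nat list" where
  "monom_vars m =
     concat (map (\<lambda>i. replicate (Poly_Mapping.lookup m i) i) (sorted_list_of_set (Poly_Mapping.keys m)))"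

lemma prod_list_monom_vars: "(\<Prod>i\<leftarrow>monom_vars m. f i) = monom_value f m"
proof -
  have "(\<Prod>i\<leftarrow>concat (map (\<lambda>i. replicate (k i) i) xs). f i) = (\<Prod>i\<leftarrow>xs. f i ^ k i)" for k xs
    by (induction xs) (simp_all add: prod_list_replicate)
  then show ?thesis
    by (simp add: monom_vars_def monom_value_def flip: prod.distinct_set_conv_list)
qed

lemma set_monom_vars: "set (monom_vars m) = Poly_Mapping.keys m"
  by (auto simp: monom_vars_def in_keys_iff)

definition monom_mor :: "nat \<Rightarrow> (nat \<Rightarrow> mor) \<Rightarrow> (nat \<Rightarrow>\<^sub>0 nat) \<Rightarrow> mor" where
  "monom_mor n \<rho> m = mprod n (map \<rho> (monom_vars m))"

lemma monom_mor_dom_cod [simp]: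
  "\<forall>i\<in>Poly_Mapping.keys m. \<rho> i \<in> Hom n 1 \<Longrightarrow> mdom (monom_mor n \<rho> m) = n"
  "\<forall>i\<in>Poly_Mapping.keys m. \<rho> i \<in> Hom n 1 \<Longrightarrow> mcod (monom_mor n \<rho> m) = 1"
  by (simp_all add: monom_mor_def set_monom_vars)

lemma abs_mor1_monom_mor:
  "\<forall>i\<in>Poly_Mapping.keys m. \<rho> i \<in> Hom n 1 \<Longrightarrow>
     abs_mor1 (monom_mor n \<rho> m) = monom_value (\<lambda>i. abs_mor1 (\<rho> i)) m"
  by (simp add: monom_mor_def abs_mor1_mprod set_monom_vars o_def prod_list_monom_vars)

lemma mcomp_monom_mor:
  "\<forall>i\<in>Poly_Mapping.keys m. \<rho> i \<in> Hom (mcod h) 1 \<Longrightarrow>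
     h ;; monom_mor (mcod h) \<rho> m = monom_mor (mdom h) (\<lambda>i. h ;; \<rho> i) m"
  by (simp add: monom_mor_def mcomp_mprod set_monom_vars o_def)

text \<open>Every monomial in \<open>Poly_Mapping.keys p\<close> has coefficient \<open>1\<close> in Z2, so \<open>p\<close> is realised
  by the sum of its monomials.\<close>

definition insertion_mor :: "nat \<Rightarrow> (nat \<Rightarrow> mor) \<Rightarrow> mpoly \<Rightarrow> mor" where
  "insertion_mor n \<rho> p = msum n (map (monom_mor n \<rho>) (sorted_list_of_set (Poly_Mapping.keys p)))"

lemma Hom_keys_of_vars:
  "\<forall>i\<in>vars p. \<rho> i \<in> Hom n k \<Longrightarrow> m \<in> Poly_Mapping.keys p \<Longrightarrow> \<forall>i\<in>Poly_Mapping.keys m. \<rho> i \<in> Hom n k"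
  unfolding vars_def by blast

lemma monom_mors_Hom:
  assumes "\<forall>i\<in>vars p. \<rho> i \<in> Hom n 1"
  shows "\<forall>X\<in>set (map (monom_mor n \<rho>) (sorted_list_of_set (Poly_Mapping.keys p))). X \<in> Hom n 1"
proof
  fix X assume "X \<in> set (map (monom_mor n \<rho>) (sorted_list_of_set (Poly_Mapping.keys p)))"
  then obtain m where "m \<in> Poly_Mapping.keys p" "X = monom_mor n \<rho> m" by auto
  with Hom_keys_of_vars[OF assms this(1)] show "X \<in> Hom n 1" by simp
qed

lemma insertion_mor_dom_cod [simp]:
  "\<forall>i\<in>vars p. \<rho> i \<in> Hom n 1 \<Longrightarrow> mdom (insertion_mor n \<rho> p) = n"
  "\<forall>i\<in>vars p. \<rho> i \<in> Hom n 1 \<Longrightarrow> mcod (insertion_mor n \<rho> p) = 1"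
  using msum_dom_cod[OF monom_mors_Hom] by (simp_all add: insertion_mor_def)

lemma abs_mor1_insertion_mor:
  assumes "\<forall>i\<in>vars p. \<rho> i \<in> Hom n 1"
  shows "abs_mor1 (insertion_mor n \<rho> p) = insertion (\<lambda>i. abs_mor1 (\<rho> i)) p"
proof -
  have "abs_mor1 (insertion_mor n \<rho> p) = (\<Sum>m\<in>Poly_Mapping.keys p. abs_mor1 (monom_mor n \<rho> m))"
    unfolding insertion_mor_def abs_mor1_msum[OF monom_mors_Hom[OF assms]]
    by (simp add: sum_list_distinct_conv_sum_set)
  also have "\<dots> = insertion (\<lambda>i. abs_mor1 (\<rho> i)) p"
    unfolding insertion_def using abs_mor1_monom_mor[OF Hom_keys_of_vars[OF assms]]
    by (intro sum.cong) (simp_all add: in_keys_iff)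
  finally show ?thesis .
qed

lemma mcomp_insertion_mor:
  assumes "\<forall>i\<in>vars p. \<rho> i \<in> Hom (mcod h) 1"
  shows "h ;; insertion_mor (mcod h) \<rho> p = insertion_mor (mdom h) (\<lambda>i. h ;; \<rho> i) p"
  unfolding insertion_mor_def mcomp_msum[OF monom_mors_Hom[OF assms]]
  using mcomp_monom_mor[OF Hom_keys_of_vars[OF assms]] by (auto intro!: arg_cong[where f = "msum _"])

definition mvar :: "nat \<Rightarrow> mor1" where
  "mvar i = abs_mor1 (proj (Suc i) i)"

lemma abs_mor1_proj: "i < n \<Longrightarrow> abs_mor1 (proj n i) = mvar i"
proof -
  assume "i < n"
  then have "proj n i = proj (Suc i) i \<otimes> mdisc (n - Suc i)"
    using proj_add_left[of i "Suc i" "n - Suc i"] by simp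
  also have "\<dots> = pad n (proj (Suc i) i)"
    using \<open>i < n\<close> mtens_mdisc_eq_mcomp[of "proj (Suc i) i"] by (simp add: pad_def weaken_def)
  finally show ?thesis
    using \<open>i < n\<close> by (simp add: abs_mor1_pad mvar_def)
qed

definition poly_mor :: "nat \<Rightarrow> mpoly \<Rightarrow> mor" where
  "poly_mor n p = insertion_mor n (proj n) p"

lemma proj_Hom_vars: "vars p \<subseteq> {..<n} \<Longrightarrow> \<forall>i\<in>vars p. proj n i \<in> Hom n 1"
  by auto

lemma poly_mor_dom_cod [simp]:
  "vars p \<subseteq> {..<n} \<Longrightarrow> mdom (poly_mor n p) = n"
  "vars p \<subseteq> {..<n} \<Longrightarrow> mcod (poly_mor n p) = 1"
  using insertion_mor_dom_cod[OF proj_Hom_vars] by (simp_all add: poly_mor_def)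

lemma abs_mor1_poly_mor:
  assumes "vars p \<subseteq> {..<n}"
  shows "abs_mor1 (poly_mor n p) = insertion mvar p"
  unfolding poly_mor_def abs_mor1_insertion_mor[OF proj_Hom_vars[OF assms]]
  by (rule insertion_cong) (use assms in \<open>auto simp: abs_mor1_proj\<close>)

lemma poly_mor_eqI:
  assumes "X \<in> Hom n 1" "vars p \<subseteq> {..<n}" "abs_mor1 X = insertion mvar p"
  shows "X = poly_mor n p"
  using assms by (intro abs_mor1_inject[of _ n]) (simp_all add: abs_mor1_poly_mor)

lemma poly_mor_PVar: "i < n \<Longrightarrow> poly_mor n (PVar i) = proj n i"
  using poly_mor_eqI[of "proj n i" n "PVar i"] by (simp add: abs_mor1_proj)

lemma mcomp_poly_mor:
  assumes "h \<in> Hom n m" "vars q \<subseteq> {..<m}"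
    and "\<And>i. i < m \<Longrightarrow> h ;; proj m i = poly_mor n (ps i)" "\<And>i. i < m \<Longrightarrow> vars (ps i) \<subseteq> {..<n}"
  shows "h ;; poly_mor m q = poly_mor n (insertion ps q)"
proof -
  have Hom: "\<forall>i\<in>vars q. h ;; proj m i \<in> Hom n 1"
    using assms by auto
  have "h ;; poly_mor m q = insertion_mor n (\<lambda>i. h ;; proj m i) q"
    using mcomp_insertion_mor[of q "proj m" h] proj_Hom_vars[OF assms(2)] assms(1)
    by (simp add: poly_mor_def)
  also have "\<dots> = poly_mor n (insertion ps q)"
  proof (rule poly_mor_eqI)
    show "insertion_mor n (\<lambda>i. h ;; proj m i) q \<in> Hom n 1"
      using Hom by simp
    show "vars (insertion ps q) \<subseteq> {..<n}"
      using assms vars_insertion[of ps q] by blast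
    have "abs_mor1 (insertion_mor n (\<lambda>i. h ;; proj m i) q) = insertion (\<lambda>i. insertion mvar (ps i)) q"
      unfolding abs_mor1_insertion_mor[OF Hom]
      by (rule insertion_cong) (use assms in \<open>auto simp: abs_mor1_poly_mor\<close>)
    then show "abs_mor1 (insertion_mor n (\<lambda>i. h ;; proj m i) q) = insertion mvar (insertion ps q)"
      by (simp add: insertion_insertion)
  qed
  finally show ?thesis .
qed

section \<open>Completeness\<close>

definition computes :: "mor \<Rightarrow> mpoly list \<Rightarrow> bool" where
  "computes F ps \<longleftrightarrow> mcod F = length ps \<and> (\<forall>p\<in>set ps. vars p \<subseteq> {..<mdom F}) \<and>
     (\<forall>j<length ps. F ;; proj (length ps) j = poly_mor (mdom F) (ps ! j))"

lemma computes_unique: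
  assumes "computes F ps" "computes F' ps" "mdom F = mdom F'"
  shows "F = F'"
  using assms by (intro mor_eqI_proj[of F "mdom F" "length ps"]) (simp_all add: computes_def)

lemma computes_mid: "computes (mid n) (map PVar [0..<n])"
  by (auto simp: computes_def poly_mor_PVar)

lemma computes_msw: "computes (msw a b) (map PVar ([a..<a + b] @ [0..<a]))"
  by (auto simp: computes_def msw_proj poly_mor_PVar nth_append)

lemma pair_proj_2 [simplified]: "pair 2 (proj 2 0) (proj 2 1) = mid 2"
  using mid_eq_tuple_proj[of 2] pair_mdisc_right[of "proj 2 1" 2]
  by (simp add: numeral_2_eq_2)

lemma proj_1_0: "proj 1 0 = mid 1"
  by (simp add: proj_def mdisc_simps)

lemma computes_poly_mor: "vars p \<subseteq> {..<n} \<Longrightarrow> computes (poly_mor n p) [p]"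
  using proj_1_0 by (simp add: computes_def)

lemma mgen_Zero_eq_poly_mor: "mgen Zero = poly_mor 0 0"
  by (intro poly_mor_eqI) (simp_all add: zero_mor1.abs_eq[symmetric] pad_eq_def)

lemma mgen_One_eq_poly_mor: "mgen One = poly_mor 0 1"
  by (intro poly_mor_eqI) (simp_all add: one_mor1.abs_eq[symmetric] pad_eq_def)

lemma mgen_Add_eq_poly_mor: "mgen Add = poly_mor 2 (PVar 0 + PVar 1)"
proof -
  have "mgen Add = madd 2 (proj 2 0) (proj 2 1)"
    by (simp add: madd_def pair_proj_2)
  also have "\<dots> = poly_mor 2 (PVar 0 + PVar 1)"
    using vars_add[of "PVar 0" "PVar 1"]
    by (intro poly_mor_eqI) (auto simp: abs_mor1_madd abs_mor1_proj insertion_add)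
  finally show ?thesis .
qed

lemma mgen_And_eq_poly_mor: "mgen And = poly_mor 2 (PVar 0 * PVar 1)"
proof -
  have "mgen And = mmul 2 (proj 2 0) (proj 2 1)"
    by (simp add: mmul_def pair_proj_2)
  also have "\<dots> = poly_mor 2 (PVar 0 * PVar 1)"
    using vars_mult[of "PVar 0" "PVar 1"]
    by (intro poly_mor_eqI) (auto simp: abs_mor1_mmul abs_mor1_proj insertion_mult)
  finally show ?thesis .
qed

lemma copy_proj: "j < 2 \<Longrightarrow> mgen Copy ;; proj 2 j = proj 1 0"
  using copy_counit_left copy_counit_right
  by (cases j) (auto simp: proj_def mdisc_simps numeral_2_eq_2)

lemma computes_mgen: "computes (mgen x) (ginterp x)"
proof (cases x)
  case Copy
  then show ?thesis
    using copy_proj by (auto simp: computes_def poly_mor_PVar numeral_2_eq_2 nth_Cons')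
next
  case Add
  then show ?thesis
    using vars_add[of "PVar 0" "PVar 1"] by (auto simp: mgen_Add_eq_poly_mor intro!: computes_poly_mor)
next
  case And
  then show ?thesis
    using vars_mult[of "PVar 0" "PVar 1"] by (auto simp: mgen_And_eq_poly_mor intro!: computes_poly_mor)
qed (simp_all add: computes_def[of "mgen Discard"] mgen_Zero_eq_poly_mor mgen_One_eq_poly_mor
    computes_poly_mor)

lemma computes_mcomp:
  assumes "computes F ps" "computes H qs" "mcod F = mdom H"
  shows "computes (F ;; H) (map (insertion (\<lambda>i. ps ! i)) qs)"
proof -
  have vars_ps: "\<And>i. i < mdom H \<Longrightarrow> vars (ps ! i) \<subseteq> {..<mdom F}"
    and vars_qs: "\<And>q. q \<in> set qs \<Longrightarrow> vars q \<subseteq> {..<mdom H}"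
    using assms by (auto simp: computes_def)
  have "F ;; H ;; proj (length qs) j = poly_mor (mdom F) (insertion (\<lambda>i. ps ! i) (qs ! j))"
    if "j < length qs" for j
  proof -
    have "F ;; H ;; proj (length qs) j = F ;; poly_mor (mdom H) (qs ! j)"
      using assms that by (simp add: computes_def mcomp_assoc)
    also have "\<dots> = poly_mor (mdom F) (insertion (\<lambda>i. ps ! i) (qs ! j))"
      using assms that vars_ps vars_qs[OF nth_mem] by (intro mcomp_poly_mor) (auto simp: computes_def)
    finally show ?thesis .
  qed
  moreover have "vars (insertion (\<lambda>i. ps ! i) q) \<subseteq> {..<mdom F}" if "q \<in> set qs" for q
    using vars_insertion[of "\<lambda>i. ps ! i" q] vars_ps vars_qs[OF that] by blast
  ultimately show ?thesis
    using assms by (simp add: computes_def)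
qed

lemma mtens_proj_left:
  assumes "F \<in> Hom a p" "H \<in> Hom c r" "j < p"
  shows "(F \<otimes> H) ;; proj (p + r) j = weaken a c ;; (F ;; proj p j)"
proof -
  have "(F \<otimes> H) ;; proj (p + r) j = (F ;; proj p j) \<otimes> mdisc c"
    using assms mdisc_natural[of H] by (simp add: proj_add_left interchange)
  then show ?thesis
    using assms mtens_mdisc_eq_mcomp[of "F ;; proj p j" c] by (simp add: weaken_def)
qed

lemma mtens_proj_right:
  assumes "F \<in> Hom a p" "H \<in> Hom c r" "i < r"
  shows "(F \<otimes> H) ;; proj (p + r) (p + i) = (mdisc a \<otimes> mid c) ;; (H ;; proj r i)"
proof -
  have "(F \<otimes> H) ;; proj (p + r) (p + i) = mdisc a \<otimes> (H ;; proj r i)"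
    using assms mdisc_natural[of F] by (simp add: proj_add_right interchange)
  then show ?thesis
    using assms mdisc_mtens_eq_mcomp[of a "H ;; proj r i"] by simp
qed

lemma weaken_proj: "k < a \<Longrightarrow> weaken a c ;; proj a k = proj (a + c) k"
  using mtens_proj_left[of "mid a" a a "mid c" c c k] by (simp add: mtens_mid weaken_def)

lemma mdisc_mtens_mid_proj: "k < c \<Longrightarrow> (mdisc a \<otimes> mid c) ;; proj c k = proj (a + c) (a + k)"
  using mtens_proj_right[of "mid a" a a "mid c" c c k] by (simp add: mtens_mid)

lemma computes_mtens_proj_left:
  assumes "computes F ps" "H \<in> Hom c r" "j < length ps"
  shows "(F \<otimes> H) ;; proj (length ps + r) j = poly_mor (mdom F + c) (ps ! j)"
proof -
  have "(F \<otimes> H) ;; proj (length ps + r) j = weaken (mdom F) c ;; poly_mor (mdom F) (ps ! j)"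
    using assms mtens_proj_left[of F "mdom F" "length ps" H c r j] by (simp add: computes_def)
  also have "\<dots> = poly_mor (mdom F + c) (insertion PVar (ps ! j))"
    using assms nth_mem[OF assms(3)]
    by (intro mcomp_poly_mor) (simp_all add: computes_def poly_mor_PVar weaken_proj)
  finally show ?thesis by simp
qed

lemma computes_mtens_proj_right:
  assumes "F \<in> Hom a p" "computes H qs" "i < length qs"
  shows "(F \<otimes> H) ;; proj (p + length qs) (p + i)
       = poly_mor (a + mdom H) (insertion (\<lambda>i. PVar (i + a)) (qs ! i))"
proof -
  have "(F \<otimes> H) ;; proj (p + length qs) (p + i) = (mdisc a \<otimes> mid (mdom H)) ;; poly_mor (mdom H) (qs ! i)"
    using assms mtens_proj_right[of F a p H "mdom H" "length qs" i] by (simp add: computes_def)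
  also have "\<dots> = poly_mor (a + mdom H) (insertion (\<lambda>i. PVar (i + a)) (qs ! i))"
    using assms nth_mem[OF assms(3)]
    by (intro mcomp_poly_mor) (simp_all add: computes_def poly_mor_PVar mdisc_mtens_mid_proj add.commute)
  finally show ?thesis .
qed

lemma computes_mtens:
  assumes "computes F ps" "computes H qs"
  shows "computes (F \<otimes> H) (ps @ map (insertion (\<lambda>i. PVar (i + mdom F))) qs)"
proof -
  let ?a = "mdom F" and ?c = "mdom H" and ?p = "length ps" and ?r = "length qs"
  have Hom: "F \<in> Hom ?a ?p" "H \<in> Hom ?c ?r"
    using assms by (simp_all add: computes_def)
  have vars_shifted: "vars (insertion (\<lambda>i. PVar (i + ?a)) q) \<subseteq> {..<?a + ?c}" if "q \<in> set qs" for q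
  proof -
    have "vars q \<subseteq> {..<?c}"
      using assms(2) that by (simp add: computes_def)
    then have "(\<Union>i\<in>vars q. vars (PVar (i + ?a))) \<subseteq> {..<?a + ?c}"
      by auto
    then show ?thesis using vars_insertion[of "\<lambda>i. PVar (i + ?a)" q] by blast
  qed
  have projs: "(F \<otimes> H) ;; proj (?p + ?r) j
      = poly_mor (?a + ?c) ((ps @ map (insertion (\<lambda>i. PVar (i + ?a))) qs) ! j)" if "j < ?p + ?r" for j
  proof (cases "j < ?p")
    case True
    then show ?thesis
      using computes_mtens_proj_left[OF assms(1) Hom(2)] by (simp add: nth_append)
  next
    case False
    then obtain i where i: "j = ?p + i"
      using le_Suc_ex[of ?p j] by auto
    then have "i < ?r" using that by simp
    then show ?thesis
      using computes_mtens_proj_right[OF Hom(1) assms(2)] i by (simp add: nth_append)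
  qed
  show ?thesis
    unfolding computes_def
  proof (intro conjI ballI allI impI)
    fix p assume "p \<in> set (ps @ map (insertion (\<lambda>i. PVar (i + ?a))) qs)"
    then show "vars p \<subseteq> {..<mdom (F \<otimes> H)}"
      using assms(1) vars_shifted by (fastforce simp: computes_def)
  qed (use Hom projs in simp_all)
qed

lemma computes_abs_mor: "wt f \<Longrightarrow> computes (abs_mor f) (interp f)"
proof (induction f)
  case (Comp f g)
  then show ?case using computes_mcomp[of "abs_mor f" "interp f" "abs_mor g" "interp g"]
    by (simp add: abs_mor_simps)
next
  case (Tensor f g)
  then show ?case using computes_mtens[of "abs_mor f" "interp f" "abs_mor g" "interp g"]
    by (simp add: abs_mor_simps)
qed (simp_all add: abs_mor_simps computes_mgen computes_mid computes_msw[simplified])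

theorem mainTheorem2:
  fixes f g :: circ and a b :: nat
  assumes "wt f" and "wt g"
    and "dom f = a" and "cod f = b" and "dom g = a" and "cod g = b"
  shows "interp f = interp g \<longleftrightarrow> eqA f g"
proof
  assume "interp f = interp g"
  then have "computes (abs_mor f) (interp f)" "computes (abs_mor g) (interp f)"
    using assms computes_abs_mor by metis+
  then have "abs_mor f = abs_mor g"
    using assms by (intro computes_unique) (simp_all add: abs_mor_simps)
  then show "eqA f g"
    using assms by (simp add: abs_mor_eq_iff)
qed (rule soundness)

end
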